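(* Let $\bar Q$ be a gentle bound quiver with finite reduced non-kissing complex. For every biclosed set of strings $S\in\mathrm{Bicl}(\bar Q)$ one has $\zeta(\eta(S))=\pi_\downarrow(S)$.
   Context: A gentle bound quiver is $\bar Q=(Q,I)$, $Q$ finite (paths composed left to right), $I$ admissible generated by length-two paths, each vertex with at most two incoming and two outgoing arrows, and for each arrow $\beta$ at most one $\alpha$ with $t(\alpha)=s(\beta),\alpha\beta\notin I$, at most one with $\alpha\beta\in I$, and dually for $\gamma$ with $s(\gamma)=t(\beta)$. Strings: composable reduced words in arrows and inverse arrows with no factor $\pi^{\pm1}$ for a path $\pi\in I$, or $\varepsilon_v$; $\mathcal S^\pm(\bar Q)$ = strings up to inversion. Blossoming quiver $\bar Q^\circledast$: add at each $v\in Q_0$ new arrows to/from new blossom vertices so each $v$ has two incoming and two outgoing arrows, with length-two relations at $v$ making it gentle. Walks: maximal strings of $\bar Q^\circledast$, up to inversion. Substrings of a walk: occurrences of factors (possibly a vertex) with all vertices in $Q_0$; top (bottom) if both adjacent arrows point away from (towards) it; $\Sigma_{\mathrm{bot}}(\omega)$ = set of bottom substrings of $\omega$ (as strings). For strings $\sigma$, $\Sigma_{\mathrm{bot}}(\sigma)$ is the set of substrings (including vertices) at each endpoint of which $\sigma$ ends or has an arrow pointing towards it. $\omega$ kisses $\omega'$ if a string is a top substring of $\omega$ and bottom substring of $\omega'$. $\mathcal K(\bar Q)$: faces are sets of pairwise non-kissing, non-self-kissing walks; finite reduced complex means finitely many non-straight walks. Closure: $\sigma\circ\tau$ = undirected strings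 joining an endpoint of $\sigma$ to one of $\tau$ by an arrow $\gamma^{\pm1}$, $\gamma\in Q_1$; $\overline S$ = union of all $\sigma_1\circ\cdots\circ\sigma_\ell$ ($\ell\ge1$, $\sigma_i\in S$); biclosed = $S$ and complement closed; $\mathrm{Bicl}(\bar Q)$ the set of biclosed sets. $\pi_\downarrow(S)=\{\sigma:\Sigma_{\mathrm{bot}}(\sigma)\subseteq S\}$. $\eta$: for $S\in\mathrm{Bicl}(\bar Q)$ and $\alpha\in Q^\circledast_1$, $\omega(\alpha,S)=\alpha_{-\ell}^{\epsilon_{-\ell}}\cdots\alpha_{-1}^{\epsilon_{-1}}\,\alpha\,\alpha_1^{\epsilon_1}\cdots\alpha_r^{\epsilon_r}$ is the walk with $\epsilon_i=-1$ iff the string $\alpha_1^{\epsilon_1}\cdots\alpha_{i-1}^{\epsilon_{i-1}}$ (which is $\varepsilon_{t(\alpha)}$ for $i=1$) lies in $S$, and $\epsilon_{-i}=1$ iff $\alpha_{-i+1}^{\epsilon_{-i+1}}\cdots\alpha_{-1}^{\epsilon_{-1}}$ (which is $\varepsilon_{s(\alpha)}$ for $i=1$) lies in $S$, extended until both ends are blossom vertices. $\eta(S)=\{\omega(\alpha,S):\alpha\in Q^\circledast_1\}$ as undirected walks (a facet of $\mathcal K(\bar Q)$). $\zeta(F)=\overline{\bigcup_{\omega\in F}\Sigma_{\mathrm{bot}}(\omega)}$ for a facet $F$. *)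

theory Defs
  imports Main
begin

record ('v, 'a) bquiver =
  verts :: "'v set"
  arrs  :: "'a set"
  src   :: "'a \<Rightarrow> 'v"
  tgt   :: "'a \<Rightarrow> 'v"
  rels  :: "('a \<times> 'a) set"   \<comment> \<open>generating length-two paths (alpha,beta) of I, composed left to right\<close>

definition wf_bquiver :: "('v, 'a) bquiver \<Rightarrow> bool" where
  "wf_bquiver Q \<longleftrightarrow> finite (verts Q) \<and> finite (arrs Q)
     \<and> (\<forall>\<alpha>\<in>arrs Q. src Q \<alpha> \<in> verts Q \<and> tgt Q \<alpha> \<in> verts Q)
     \<and> rels Q \<subseteq> {(\<alpha>, \<beta>). \<alpha> \<in> arrs Q \<and> \<beta> \<in> arrs Q \<and> tgt Q \<alpha> = src Q \<beta>}"

definition is_path :: "('v, 'a) bquiver \<Rightarrow> 'a list \<Rightarrow> bool" where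
  "is_path Q p \<longleftrightarrow> set p \<subseteq> arrs Q
     \<and> (\<forall>i. Suc i < length p \<longrightarrow> tgt Q (p ! i) = src Q (p ! Suc i))"

definition admissible :: "('v, 'a) bquiver \<Rightarrow> bool" where
  "admissible Q \<longleftrightarrow> (\<exists>m. \<forall>p. is_path Q p \<and> length p = m \<longrightarrow>
       (\<exists>i. Suc i < length p \<and> (p ! i, p ! Suc i) \<in> rels Q))"

definition gentle :: "('v, 'a) bquiver \<Rightarrow> bool" where
  "gentle Q \<longleftrightarrow> wf_bquiver Q \<and> admissible Q
     \<and> (\<forall>v\<in>verts Q. card {\<alpha>\<in>arrs Q. tgt Q \<alpha> = v} \<le> 2 \<and> card {\<alpha>\<in>arrs Q. src Q \<alpha> = v} \<le> 2)
     \<and> (\<forall>\<beta>\<in>arrs Q.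
          card {\<alpha>\<in>arrs Q. tgt Q \<alpha> = src Q \<beta> \<and> (\<alpha>, \<beta>) \<notin> rels Q} \<le> 1
        \<and> card {\<alpha>\<in>arrs Q. tgt Q \<alpha> = src Q \<beta> \<and> (\<alpha>, \<beta>) \<in> rels Q} \<le> 1
        \<and> card {\<gamma>\<in>arrs Q. src Q \<gamma> = tgt Q \<beta> \<and> (\<beta>, \<gamma>) \<notin> rels Q} \<le> 1
        \<and> card {\<gamma>\<in>arrs Q. src Q \<gamma> = tgt Q \<beta> \<and> (\<beta>, \<gamma>) \<in> rels Q} \<le> 1)"

definition is_blossoming :: "('v, 'a) bquiver \<Rightarrow> ('v, 'a) bquiver \<Rightarrow> bool" where
  "is_blossoming Q Qb \<longleftrightarrow> gentle Qb
     \<and> verts Q \<subseteq> verts Qb \<and> arrs Q \<subseteq> arrs Qb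
     \<and> (\<forall>\<alpha>\<in>arrs Q. src Qb \<alpha> = src Q \<alpha> \<and> tgt Qb \<alpha> = tgt Q \<alpha>)
     \<and> rels Qb \<inter> (arrs Q \<times> arrs Q) = rels Q
     \<and> (\<forall>\<alpha>\<in>arrs Qb - arrs Q. (src Qb \<alpha> \<in> verts Q) \<noteq> (tgt Qb \<alpha> \<in> verts Q))
     \<and> (\<forall>b\<in>verts Qb - verts Q. card {\<alpha>\<in>arrs Qb. src Qb \<alpha> = b \<or> tgt Qb \<alpha> = b} = 1)
     \<and> (\<forall>v\<in>verts Q. card {\<alpha>\<in>arrs Qb. tgt Qb \<alpha> = v} = 2 \<and> card {\<alpha>\<in>arrs Qb. src Qb \<alpha> = v} = 2)"

text \<open>A letter is an arrow together with an orientation (True = direct arrow, False = inverse arrow).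
  A (directed) string is a start vertex together with a list of letters; (v, []) is the
  lazy string \<open>\<epsilon>_v\<close>.\<close>

type_synonym 'a letter = "'a \<times> bool"
type_synonym ('v, 'a) str = "'v \<times> 'a letter list"

fun lsrc :: "('v, 'a) bquiver \<Rightarrow> 'a letter \<Rightarrow> 'v" where
  "lsrc Q (\<alpha>, d) = (if d then src Q \<alpha> else tgt Q \<alpha>)"

fun ltgt :: "('v, 'a) bquiver \<Rightarrow> 'a letter \<Rightarrow> 'v" where
  "ltgt Q (\<alpha>, d) = (if d then tgt Q \<alpha> else src Q \<alpha>)"

definition vert_at :: "('v, 'a) bquiver \<Rightarrow> ('v, 'a) str \<Rightarrow> nat \<Rightarrow> 'v" where
  "vert_at Q \<sigma> k = (if k = 0 then fst \<sigma> else ltgt Q (snd \<sigma> ! (k - 1)))"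

definition str_end :: "('v, 'a) bquiver \<Rightarrow> ('v, 'a) str \<Rightarrow> 'v" where
  "str_end Q \<sigma> = vert_at Q \<sigma> (length (snd \<sigma>))"

definition inv_str :: "('v, 'a) bquiver \<Rightarrow> ('v, 'a) str \<Rightarrow> ('v, 'a) str" where
  "inv_str Q \<sigma> = (str_end Q \<sigma>, rev (map (\<lambda>(\<alpha>, d). (\<alpha>, \<not> d)) (snd \<sigma>)))"

text \<open>sets of undirected strings are represented as sets of directed strings closed under inversion\<close>
definition sym_cl :: "('v, 'a) bquiver \<Rightarrow> ('v, 'a) str set \<Rightarrow> ('v, 'a) str set" where
  "sym_cl Q X = X \<union> inv_str Q ` X"

definition is_string :: "('v, 'a) bquiver \<Rightarrow> ('v, 'a) str \<Rightarrow> bool" where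
  "is_string Q \<sigma> \<longleftrightarrow> (let ls = snd \<sigma> in
       fst \<sigma> \<in> verts Q
     \<and> (\<forall>k<length ls. fst (ls ! k) \<in> arrs Q \<and> lsrc Q (ls ! k) = vert_at Q \<sigma> k)
     \<and> (\<forall>k. Suc k < length ls \<longrightarrow>
            \<not> (fst (ls ! Suc k) = fst (ls ! k) \<and> snd (ls ! Suc k) \<noteq> snd (ls ! k)))
     \<and> (\<forall>k. Suc k < length ls \<longrightarrow>
            \<not> (snd (ls ! k) \<and> snd (ls ! Suc k) \<and> (fst (ls ! k), fst (ls ! Suc k)) \<in> rels Q))
     \<and> (\<forall>k. Suc k < length ls \<longrightarrow>
            \<not> (\<not> snd (ls ! k) \<and> \<not> snd (ls ! Suc k) \<and> (fst (ls ! Suc k), fst (ls ! k)) \<in> rels Q)))"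

definition Strings :: "('v, 'a) bquiver \<Rightarrow> ('v, 'a) str set" where
  "Strings Q = {\<sigma>. is_string Q \<sigma>}"

definition is_walk :: "('v, 'a) bquiver \<Rightarrow> ('v, 'a) str \<Rightarrow> bool" where
  "is_walk Qb \<omega> \<longleftrightarrow> is_string Qb \<omega>
     \<and> \<not> (\<exists>l. is_string Qb (fst \<omega>, snd \<omega> @ [l]))
     \<and> \<not> (\<exists>l. is_string Qb (lsrc Qb l, l # snd \<omega>))"

definition straight :: "('v, 'a) str \<Rightarrow> bool" where
  "straight \<omega> \<longleftrightarrow> (\<forall>l\<in>set (snd \<omega>). snd l) \<or> (\<forall>l\<in>set (snd \<omega>). \<not> snd l)"

text \<open>finite reduced non-kissing complex: finitely many non-straight walks\<close>
definition finite_reduced_complex :: "('v, 'a) bquiver \<Rightarrow> bool" where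
  "finite_reduced_complex Qb \<longleftrightarrow> finite {\<omega>. is_walk Qb \<omega> \<and> \<not> straight \<omega>}"

text \<open>bottom substrings of a walk: factors with all vertices in Q_0 whose two adjacent
  letters point towards the factor\<close>
definition sigma_bot_walk :: "('v, 'a) bquiver \<Rightarrow> ('v, 'a) bquiver \<Rightarrow> ('v, 'a) str \<Rightarrow> ('v, 'a) str set" where
  "sigma_bot_walk Q Qb \<omega> = sym_cl Qb
     {(vert_at Qb \<omega> i, take (j - i) (drop i (snd \<omega>))) | i j.
        0 < i \<and> i \<le> j \<and> j < length (snd \<omega>)
      \<and> (\<forall>k. i \<le> k \<and> k \<le> j \<longrightarrow> vert_at Qb \<omega> k \<in> verts Q)
      \<and> snd (snd \<omega> ! (i - 1)) \<and> \<not> snd (snd \<omega> ! j)}"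

text \<open>bottom substrings of a string: factors (possibly lazy) at each endpoint of which the string
  ends or has a letter pointing towards the factor\<close>
definition sigma_bot_str :: "('v, 'a) bquiver \<Rightarrow> ('v, 'a) str \<Rightarrow> ('v, 'a) str set" where
  "sigma_bot_str Q \<sigma> = sym_cl Q
     {(vert_at Q \<sigma> i, take (j - i) (drop i (snd \<sigma>))) | i j.
        i \<le> j \<and> j \<le> length (snd \<sigma>)
      \<and> (i = 0 \<or> snd (snd \<sigma> ! (i - 1)))
      \<and> (j = length (snd \<sigma>) \<or> \<not> snd (snd \<sigma> ! j))}"

text \<open>closure: all strings \<open>\<sigma>_1 \<gamma>_1 \<sigma>_2 ... \<gamma>_{l-1} \<sigma>_l\<close> with \<open>\<sigma>_i \<in> S\<close> (either orientation,
  S being inversion-closed) and \<open>\<gamma>_i\<close> letters of arrows of Q\<close>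
inductive_set clos :: "('v, 'a) bquiver \<Rightarrow> ('v, 'a) str set \<Rightarrow> ('v, 'a) str set"
  for Q :: "('v, 'a) bquiver" and S :: "('v, 'a) str set" where
  base: "\<sigma> \<in> S \<Longrightarrow> \<sigma> \<in> clos Q S"
| join: "\<rho> \<in> clos Q S \<Longrightarrow> \<tau> \<in> S \<Longrightarrow> fst l \<in> arrs Q \<Longrightarrow>
         lsrc Q l = str_end Q \<rho> \<Longrightarrow> ltgt Q l = fst \<tau> \<Longrightarrow>
         is_string Q (fst \<rho>, snd \<rho> @ [l] @ snd \<tau>) \<Longrightarrow>
         (fst \<rho>, snd \<rho> @ [l] @ snd \<tau>) \<in> clos Q S"

definition Bicl :: "('v, 'a) bquiver \<Rightarrow> ('v, 'a) str set set" where
  "Bicl Q = {S. S \<subseteq> Strings Q \<and> inv_str Q ` S \<subseteq> S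
               \<and> clos Q S = S \<and> clos Q (Strings Q - S) = Strings Q - S}"

definition pi_down :: "('v, 'a) bquiver \<Rightarrow> ('v, 'a) str set \<Rightarrow> ('v, 'a) str set" where
  "pi_down Q S = {\<sigma> \<in> Strings Q. sigma_bot_str Q \<sigma> \<subseteq> S}"

definition is_omega :: "('v, 'a) bquiver \<Rightarrow> ('v, 'a) str set \<Rightarrow> 'a \<Rightarrow> ('v, 'a) str \<Rightarrow> bool" where
  "is_omega Qb S \<beta> \<omega> \<longleftrightarrow> is_walk Qb \<omega>
     \<and> (\<exists>pre post. snd \<omega> = pre @ [(\<beta>, True)] @ post
        \<and> (\<forall>i<length post. (\<not> snd (post ! i)) \<longleftrightarrow> (tgt Qb \<beta>, take i post) \<in> S)
        \<and> (\<forall>k<length pre. snd (pre ! k) \<longleftrightarrow> (ltgt Qb (pre ! k), drop (Suc k) pre) \<in> S))"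

definition eta :: "('v, 'a) bquiver \<Rightarrow> ('v, 'a) str set \<Rightarrow> ('v, 'a) str set" where
  "eta Qb S = sym_cl Qb {\<omega>. \<exists>\<beta>\<in>arrs Qb. is_omega Qb S \<beta> \<omega>}"

definition zeta :: "('v, 'a) bquiver \<Rightarrow> ('v, 'a) bquiver \<Rightarrow> ('v, 'a) str set \<Rightarrow> ('v, 'a) str set" where
  "zeta Q Qb F = clos Q (\<Union>\<omega>\<in>F. sigma_bot_walk Q Qb \<omega>)"

end

theory Submission
  imports Defs
begin

text \<open>
  For \<open>\<subseteq>\<close>, let \<open>\<tau>\<close> be a bottom substring of a walk \<open>\<omega>(\<beta>, S)\<close>. The sign rule defining
  \<open>\<omega>(\<beta>, S)\<close> says which strings running from the end of \<open>\<beta>\<close> to a neighbour of \<open>\<tau>\<close> lie in \<open>S\<close>.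
  As \<open>S\<close> and its complement are closed, \<open>\<tau>\<close> is then either a join of two strings of \<open>S\<close> or
  the piece left over when a string of \<open>S\<close> is split at a letter whose other side is not in \<open>S\<close>,
  so \<open>\<tau> \<in> S\<close>. The bottom substrings of \<open>\<tau>\<close> are again bottom substrings of the walk, hence
  \<open>\<tau> \<in> \<pi>\<^sub>\<down>(S)\<close>; and \<open>\<pi>\<^sub>\<down>(S)\<close> is closed under the joins generating the closure.

  For \<open>\<supseteq>\<close>, cut \<open>\<sigma> \<in> \<pi>\<^sub>\<down>(S)\<close> before its first direct letter whose prefix lies in \<open>S\<close>.
  That prefix is a bottom substring of \<open>\<omega>(\<beta>, S)\<close> for an arrow \<open>\<beta>\<close> of the blossoming quiver
  ending at the start of \<open>\<sigma>\<close>; the walk exists because finiteness of the reduced complex bounds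
  the length of strings. The rest of \<open>\<sigma>\<close> after the cut letter is again in \<open>\<pi>\<^sub>\<down>(S)\<close>, so by
  induction on the length \<open>\<sigma>\<close> is a join of such generators.
\<close>

section \<open>Strings and their inverses\<close>

definition inv_letter :: "'a letter \<Rightarrow> 'a letter" where
  "inv_letter l = (fst l, \<not> snd l)"

definition inv_letters :: "'a letter list \<Rightarrow> 'a letter list" where
  "inv_letters ls = rev (map inv_letter ls)"

definition letters_compatible :: "('v, 'a) bquiver \<Rightarrow> 'a letter \<Rightarrow> 'a letter \<Rightarrow> bool" where
  "letters_compatible G l l' \<longleftrightarrow> \<not> (fst l' = fst l \<and> snd l' \<noteq> snd l)
     \<and> \<not> (snd l \<and> snd l' \<and> (fst l, fst l') \<in> rels G)
     \<and> \<not> (\<not> snd l \<and> \<not> snd l' \<and> (fst l', fst l) \<in> rels G)"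

text \<open>The conditions of \<^const>\<open>is_string\<close> except membership of the start vertex,
  in a form suited to induction on the letter list.\<close>
fun string_chain :: "('v, 'a) bquiver \<Rightarrow> 'v \<Rightarrow> 'a letter list \<Rightarrow> bool" where
  "string_chain G v [] = True"
| "string_chain G v (l # ls) \<longleftrightarrow> fst l \<in> arrs G \<and> lsrc G l = v \<and> string_chain G (ltgt G l) ls
     \<and> (ls \<noteq> [] \<longrightarrow> letters_compatible G l (hd ls))"

definition str_verts :: "('v, 'a) bquiver \<Rightarrow> ('v, 'a) str \<Rightarrow> 'v set" where
  "str_verts G \<sigma> = insert (fst \<sigma>) (ltgt G ` set (snd \<sigma>))"

lemma str_end_conv: "str_end G (v, ls) = (if ls = [] then v else ltgt G (last ls))"
  by (simp add: str_end_def vert_at_def last_conv_nth)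

lemma str_end_Nil [simp]: "str_end G (v, []) = v"
  by (simp add: str_end_conv)

lemma str_end_Cons [simp]: "str_end G (v, l # ls) = str_end G (ltgt G l, ls)"
  by (simp add: str_end_conv)

lemma str_end_append: "str_end G (v, A @ B) = str_end G (str_end G (v, A), B)"
  by (induction A arbitrary: v) auto

lemma vert_at_eq_str_end_take: "k \<le> length ls \<Longrightarrow> vert_at G (v, ls) k = str_end G (v, take k ls)"
  by (auto simp: vert_at_def str_end_conv last_conv_nth min_def)

lemma vert_at_Cons_Suc: "vert_at G (v, l # ls) (Suc k) = vert_at G (ltgt G l, ls) k"
  by (cases k) (auto simp: vert_at_def)

lemma string_chain_iff_nth:
  "string_chain G v ls \<longleftrightarrow>
     (\<forall>k<length ls. fst (ls ! k) \<in> arrs G \<and> lsrc G (ls ! k) = vert_at G (v, ls) k)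
   \<and> (\<forall>k. Suc k < length ls \<longrightarrow> letters_compatible G (ls ! k) (ls ! Suc k))"
proof (induction ls arbitrary: v)
  case Nil
  then show ?case by simp
next
  case (Cons l ls)
  show ?case
    unfolding string_chain.simps Cons.IH
    by (cases ls) (auto simp: All_less_Suc2 vert_at_Cons_Suc vert_at_def)
qed

lemma is_string_iff_chain: "is_string G (v, ls) \<longleftrightarrow> v \<in> verts G \<and> string_chain G v ls"
  by (auto simp: is_string_def string_chain_iff_nth letters_compatible_def Let_def)

lemma string_chain_append:
  "string_chain G v (A @ B) \<longleftrightarrow> string_chain G v A \<and> string_chain G (str_end G (v, A)) B
     \<and> (A \<noteq> [] \<and> B \<noteq> [] \<longrightarrow> letters_compatible G (last A) (hd B))"
  by (induction A arbitrary: v) (auto simp: hd_append)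

lemma string_chain_split:
  "string_chain G w (A @ l # B) \<Longrightarrow>
     fst l \<in> arrs G \<and> lsrc G l = str_end G (w, A) \<and> string_chain G w A \<and> string_chain G (ltgt G l) B"
  by (simp add: string_chain_append)

lemma fst_inv_letter [simp]: "fst (inv_letter l) = fst l"
  and snd_inv_letter [simp]: "snd (inv_letter l) \<longleftrightarrow> \<not> snd l"
  and inv_letter_inv_letter [simp]: "inv_letter (inv_letter l) = l"
  by (auto simp: inv_letter_def)

lemma lsrc_inv_letter [simp]: "lsrc G (inv_letter l) = ltgt G l"
  and ltgt_inv_letter [simp]: "ltgt G (inv_letter l) = lsrc G l"
  by (cases l; simp add: inv_letter_def)+

lemma inv_letters_Nil [simp]: "inv_letters [] = []"
  and inv_letters_Cons [simp]: "inv_letters (l # ls) = inv_letters ls @ [inv_letter l]"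
  and inv_letters_append [simp]: "inv_letters (A @ B) = inv_letters B @ inv_letters A"
  and inv_letters_inv_letters [simp]: "inv_letters (inv_letters ls) = ls"
  and length_inv_letters [simp]: "length (inv_letters ls) = length ls"
  and inv_letters_eq_Nil_iff [simp]: "inv_letters ls = [] \<longleftrightarrow> ls = []"
  by (simp_all add: inv_letters_def rev_map comp_def)

lemma last_inv_letters: "ls \<noteq> [] \<Longrightarrow> last (inv_letters ls) = inv_letter (hd ls)"
  by (cases ls) auto

lemma hd_inv_letters: "ls \<noteq> [] \<Longrightarrow> hd (inv_letters ls) = inv_letter (last ls)"
  by (induction ls) auto

lemma set_inv_letters: "set (inv_letters ls) = inv_letter ` set ls"
  by (simp add: inv_letters_def)

lemma letters_compatible_inv:
  "letters_compatible G l l' \<Longrightarrow> letters_compatible G (inv_letter l') (inv_letter l)"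
  by (auto simp: letters_compatible_def)

lemma string_chain_inv_letters:
  "string_chain G v ls \<Longrightarrow>
     string_chain G (str_end G (v, ls)) (inv_letters ls) \<and> str_end G (str_end G (v, ls), inv_letters ls) = v"
proof (induction ls arbitrary: v)
  case Nil
  then show ?case by simp
next
  case (Cons l ls)
  then have IH: "string_chain G (str_end G (ltgt G l, ls)) (inv_letters ls)"
    "str_end G (str_end G (ltgt G l, ls), inv_letters ls) = ltgt G l"
    by simp_all
  have "ls \<noteq> [] \<Longrightarrow> letters_compatible G (last (inv_letters ls)) (inv_letter l)"
    using Cons.prems by (simp add: last_inv_letters letters_compatible_inv)
  then show ?case
    using Cons.prems IH by (simp add: string_chain_append str_end_append)
qed

lemma inv_str_conv: "inv_str G (v, ls) = (str_end G (v, ls), inv_letters ls)"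
  by (simp add: inv_str_def inv_letters_def inv_letter_def case_prod_beta)

lemma inv_str_inv_str: "string_chain G v ls \<Longrightarrow> inv_str G (inv_str G (v, ls)) = (v, ls)"
  using string_chain_inv_letters[of G v ls] by (simp add: inv_str_conv)

lemma str_verts_Cons: "str_verts G (w, l # B) = insert w (str_verts G (ltgt G l, B))"
  by (simp add: str_verts_def)

lemma str_verts_conv: "str_verts G (w, B) = (\<lambda>t. str_end G (w, take t B)) ` {..length B}"
proof (induction B arbitrary: w)
  case Nil
  then show ?case by (simp add: str_verts_def)
next
  case (Cons l B)
  then show ?case
    by (simp add: str_verts_Cons atMost_Suc_eq_insert_0 image_image)
qed

lemma str_end_in_str_verts: "str_end G (v, ls) \<in> str_verts G (v, ls)"
  by (simp add: str_end_conv str_verts_def)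

lemma str_verts_append: "str_verts G (v, A @ B) = str_verts G (v, A) \<union> str_verts G (str_end G (v, A), B)"
  by (auto simp: str_verts_def str_end_conv)

lemma str_verts_inv_str: "string_chain G v ls \<Longrightarrow> str_verts G (inv_str G (v, ls)) = str_verts G (v, ls)"
proof -
  have "string_chain G v ls \<Longrightarrow> insert (str_end G (v, ls)) (lsrc G ` set ls) = insert v (ltgt G ` set ls)"
    by (induction ls arbitrary: v) auto
  then show "string_chain G v ls \<Longrightarrow> ?thesis"
    by (simp add: str_verts_def inv_str_conv set_inv_letters image_image)
qed

lemma str_verts_subset:
  "wf_bquiver G \<Longrightarrow> v \<in> verts G \<Longrightarrow> string_chain G v ls \<Longrightarrow> str_verts G (v, ls) \<subseteq> verts G"
proof (induction ls arbitrary: v)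
  case Nil
  then show ?case by (simp add: str_verts_def)
next
  case (Cons l ls)
  then have "ltgt G l \<in> verts G"
    by (cases l) (auto simp: wf_bquiver_def)
  with Cons show ?case by (auto simp: str_verts_def)
qed

lemma str_end_in_verts:
  "wf_bquiver G \<Longrightarrow> v \<in> verts G \<Longrightarrow> string_chain G v ls \<Longrightarrow> str_end G (v, ls) \<in> verts G"
  using str_verts_subset str_end_in_str_verts by fast

lemma is_string_inv_str: "wf_bquiver G \<Longrightarrow> is_string G \<sigma> \<Longrightarrow> is_string G (inv_str G \<sigma>)"
  by (cases \<sigma>) (auto simp: is_string_iff_chain inv_str_conv string_chain_inv_letters str_end_in_verts)

lemma is_string_prefix: "is_string G (v, A @ B) \<Longrightarrow> is_string G (v, A)"
  by (simp add: is_string_iff_chain string_chain_append)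

lemma is_string_suffix: "wf_bquiver G \<Longrightarrow> is_string G (v, A @ B) \<Longrightarrow> is_string G (str_end G (v, A), B)"
  by (auto simp: is_string_iff_chain string_chain_append intro: str_end_in_verts)

lemma is_string_split:
  assumes "wf_bquiver G" "is_string G (w, A @ l # B)"
  shows "fst l \<in> arrs G \<and> lsrc G l = str_end G (w, A) \<and> is_string G (w, A) \<and> is_string G (ltgt G l, B)"
  using is_string_suffix[OF assms(1), of w "A @ [l]" B] assms(2) string_chain_split[of G w A l B]
  by (simp add: is_string_iff_chain str_end_append)

section \<open>Bottom factors\<close>

lemma append3_eq_Cons_split:
  assumes "A @ B @ C = P @ l # R"
  obtains (left) A' where "A = P @ l # A'" "R = A' @ B @ C"
  | (right) C' where "C = C' @ l # R" "P = A @ B @ C'"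
  | (middle) B1 B2 where "B = B1 @ l # B2" "P = A @ B1" "R = B2 @ C"
proof -
  obtain us where "A = P @ us \<and> us @ B @ C = l # R \<or> A @ us = P \<and> B @ C = us @ l # R"
    using assms by (auto simp: append_eq_append_conv2)
  then consider A' where "A = P @ l # A'" "R = A' @ B @ C" | us where "P = A @ us" "B @ C = us @ l # R"
    by (cases us) auto
  then show thesis
  proof cases
    case 1
    then show thesis by (rule left)
  next
    case (2 us)
    then obtain vs where "B = us @ vs \<and> vs @ C = l # R \<or> us = B @ vs \<and> C = vs @ l # R"
      by (auto simp: append_eq_append_conv2)
    then show thesis
      using \<open>P = A @ us\<close> middle[of us] right by (cases vs) auto
  qed
qed

definition bot_factors :: "('v, 'a) bquiver \<Rightarrow> ('v, 'a) str \<Rightarrow> ('v, 'a) str set" where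
  "bot_factors G \<sigma> = {(str_end G (fst \<sigma>, A), B) | A B C.
     snd \<sigma> = A @ B @ C \<and> (A = [] \<or> snd (last A)) \<and> (C = [] \<or> \<not> snd (hd C))}"

definition walk_bot_factors :: "('v, 'a) bquiver \<Rightarrow> ('v, 'a) bquiver \<Rightarrow> ('v, 'a) str \<Rightarrow> ('v, 'a) str set" where
  "walk_bot_factors Q G \<omega> = {(str_end G (fst \<omega>, A), B) | A B C.
     snd \<omega> = A @ B @ C \<and> (A \<noteq> [] \<and> snd (last A)) \<and> (C \<noteq> [] \<and> \<not> snd (hd C))
     \<and> str_verts G (str_end G (fst \<omega>, A), B) \<subseteq> verts Q}"

lemma bot_factorsI:
  "snd \<sigma> = A @ B @ C \<Longrightarrow> A = [] \<or> snd (last A) \<Longrightarrow> C = [] \<or> \<not> snd (hd C) \<Longrightarrow>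
     (str_end G (fst \<sigma>, A), B) \<in> bot_factors G \<sigma>"
  unfolding bot_factors_def by blast

lemma bot_factorsE:
  assumes "x \<in> bot_factors G \<sigma>"
  obtains A B C where "x = (str_end G (fst \<sigma>, A), B)" "snd \<sigma> = A @ B @ C"
    "A = [] \<or> snd (last A)" "C = [] \<or> \<not> snd (hd C)"
  using assms unfolding bot_factors_def by blast

lemma walk_bot_factorsI:
  "snd \<omega> = A @ B @ C \<Longrightarrow> A \<noteq> [] \<Longrightarrow> snd (last A) \<Longrightarrow> C \<noteq> [] \<Longrightarrow> \<not> snd (hd C) \<Longrightarrow>
     str_verts G (str_end G (fst \<omega>, A), B) \<subseteq> verts Q \<Longrightarrow>
     (str_end G (fst \<omega>, A), B) \<in> walk_bot_factors Q G \<omega>"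
  unfolding walk_bot_factors_def by blast

lemma walk_bot_factorsE:
  assumes "x \<in> walk_bot_factors Q G \<omega>"
  obtains A B C where "x = (str_end G (fst \<omega>, A), B)" "snd \<omega> = A @ B @ C"
    "A \<noteq> []" "snd (last A)" "C \<noteq> []" "\<not> snd (hd C)"
    "str_verts G (str_end G (fst \<omega>, A), B) \<subseteq> verts Q"
  using assms unfolding walk_bot_factors_def by blast

lemma factor_index_conv:
  "{(vert_at G (v, ls) i, take (j - i) (drop i ls)) | i j. i \<le> j \<and> j \<le> length ls \<and> P i j}
   = {(str_end G (v, A), B) | A B C. ls = A @ B @ C \<and> P (length A) (length A + length B)}"
proof (intro equalityI subsetI)
  fix x
  assume "x \<in> {(vert_at G (v, ls) i, take (j - i) (drop i ls)) | i j. i \<le> j \<and> j \<le> length ls \<and> P i j}"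
  then obtain i j where x: "x = (vert_at G (v, ls) i, take (j - i) (drop i ls))"
    and ij: "i \<le> j" "j \<le> length ls" "P i j"
    by blast
  have "ls = take i ls @ take (j - i) (drop i ls) @ drop j ls"
    by (metis append.assoc append_take_drop_id ij(1) le_add_diff_inverse take_add)
  moreover have "x = (str_end G (v, take i ls), take (j - i) (drop i ls))"
    using x ij by (simp add: vert_at_eq_str_end_take)
  ultimately show "x \<in> {(str_end G (v, A), B) | A B C. ls = A @ B @ C \<and> P (length A) (length A + length B)}"
    using ij by (intro CollectI exI[of _ "take i ls"] exI[of _ "take (j - i) (drop i ls)"] exI[of _ "drop j ls"]) auto
next
  fix x
  assume "x \<in> {(str_end G (v, A), B) | A B C. ls = A @ B @ C \<and> P (length A) (length A + length B)}"
  then obtain A B C where "x = (str_end G (v, A), B)" "ls = A @ B @ C" "P (length A) (length A + length B)"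
    by blast
  then show "x \<in> {(vert_at G (v, ls) i, take (j - i) (drop i ls)) | i j. i \<le> j \<and> j \<le> length ls \<and> P i j}"
    by (intro CollectI exI[of _ "length A"] exI[of _ "length A + length B"]) (simp add: vert_at_eq_str_end_take)
qed

lemma factor_boundary_iff:
  assumes "ls = A @ B @ C"
  shows "(length A = 0 \<or> snd (ls ! (length A - 1))) \<longleftrightarrow> (A = [] \<or> snd (last A))"
    and "(length A + length B = length ls \<or> \<not> snd (ls ! (length A + length B))) \<longleftrightarrow> (C = [] \<or> \<not> snd (hd C))"
  unfolding assms by (cases A rule: rev_cases; cases C; simp add: nth_append)+

lemma sigma_bot_str_eq: "sigma_bot_str G \<sigma> = sym_cl G (bot_factors G \<sigma>)"
proof (cases \<sigma>)
  case (Pair v ls)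
  have "{(vert_at G (v, ls) i, take (j - i) (drop i ls)) | i j. i \<le> j \<and> j \<le> length ls
      \<and> (i = 0 \<or> snd (ls ! (i - 1))) \<and> (j = length ls \<or> \<not> snd (ls ! j))} = bot_factors G (v, ls)"
    unfolding factor_index_conv bot_factors_def fst_conv snd_conv
    by (intro Collect_cong ex_cong1 conj_cong refl) (erule factor_boundary_iff)+
  then show ?thesis
    by (simp add: Pair sigma_bot_str_def)
qed

lemma str_verts_factor:
  assumes "ls = A @ B @ C"
  shows "str_verts G (str_end G (v, A), B) = vert_at G (v, ls) ` {length A..length A + length B}"
proof -
  have "{length A..length A + length B} = plus (length A) ` {..length B}"
    using image_add_atLeastAtMost[of "length A" 0 "length B"] by (simp add: atLeast0AtMost add.commute)
  then have "vert_at G (v, ls) ` {length A..length A + length B}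
      = (\<lambda>t. vert_at G (v, ls) (length A + t)) ` {..length B}"
    by (simp add: image_image)
  also have "\<dots> = (\<lambda>t. str_end G (str_end G (v, A), take t B)) ` {..length B}"
    using assms by (intro image_cong) (simp_all add: vert_at_eq_str_end_take str_end_append)
  finally show ?thesis
    by (simp add: str_verts_conv)
qed

lemma walk_factor_conds_iff:
  assumes "ls = A @ B @ C"
  shows "((0 < length A \<and> snd (ls ! (length A - 1)))
      \<and> (length A + length B < length ls \<and> \<not> snd (ls ! (length A + length B)))
      \<and> vert_at G (v, ls) ` {length A..length A + length B} \<subseteq> verts Q)
    \<longleftrightarrow> (A \<noteq> [] \<and> snd (last A)) \<and> (C \<noteq> [] \<and> \<not> snd (hd C))
      \<and> str_verts G (str_end G (v, A), B) \<subseteq> verts Q"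
  unfolding str_verts_factor[OF assms] unfolding assms
  by (cases A rule: rev_cases; cases C; simp add: nth_append)

lemma sigma_bot_walk_eq: "sigma_bot_walk Q G \<omega> = sym_cl G (walk_bot_factors Q G \<omega>)"
proof (cases \<omega>)
  case (Pair v ls)
  have "{(vert_at G (v, ls) i, take (j - i) (drop i ls)) | i j.
        0 < i \<and> i \<le> j \<and> j < length ls \<and> (\<forall>k. i \<le> k \<and> k \<le> j \<longrightarrow> vert_at G (v, ls) k \<in> verts Q)
      \<and> snd (ls ! (i - 1)) \<and> \<not> snd (ls ! j)}
    = {(vert_at G (v, ls) i, take (j - i) (drop i ls)) | i j. i \<le> j \<and> j \<le> length ls
      \<and> (0 < i \<and> snd (ls ! (i - 1))) \<and> (j < length ls \<and> \<not> snd (ls ! j))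
      \<and> vert_at G (v, ls) ` {i..j} \<subseteq> verts Q}"
    by (intro Collect_cong ex_cong1) (auto simp: image_subset_iff)
  also have "\<dots> = walk_bot_factors Q G (v, ls)"
    unfolding factor_index_conv walk_bot_factors_def fst_conv snd_conv
    by (intro Collect_cong ex_cong1 conj_cong[OF refl]) (erule walk_factor_conds_iff)
  finally show ?thesis
    by (simp add: Pair sigma_bot_walk_def)
qed

lemma bot_factors_prefix: "Y = [] \<or> \<not> snd (hd Y) \<Longrightarrow> (v, X) \<in> bot_factors G (v, X @ Y)"
  unfolding bot_factors_def by force

lemma bot_factors_suffix:
  assumes "A = [] \<or> snd (last A)"
  shows "bot_factors G (str_end G (v, A), Y) \<subseteq> bot_factors G (v, A @ Y)"
proof
  fix x
  assume "x \<in> bot_factors G (str_end G (v, A), Y)"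
  then obtain A' B C where "x = (str_end G (v, A @ A'), B)" "Y = A' @ B @ C"
    "A' = [] \<or> snd (last A')" "C = [] \<or> \<not> snd (hd C)"
    unfolding bot_factors_def by (auto simp: str_end_append)
  moreover from this assms have "A @ A' = [] \<or> snd (last (A @ A'))"
    by (cases "A' = []") auto
  ultimately show "x \<in> bot_factors G (v, A @ Y)"
    unfolding bot_factors_def by force
qed

lemma bot_factors_append_Cons:
  assumes "x \<in> bot_factors G (u, X @ l # Y)"
  obtains "x \<in> bot_factors G (u, X)"
  | "x \<in> bot_factors G (ltgt G l, Y)"
  | w B1 B2 where "x = (w, B1 @ l # B2)" "(w, B1) \<in> bot_factors G (u, X)"
      "(ltgt G l, B2) \<in> bot_factors G (ltgt G l, Y)"
proof -
  obtain A B C where x: "x = (str_end G (u, A), B)" and ABC: "A @ B @ C = X @ l # Y"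
    and A: "A = [] \<or> snd (last A)" and C: "C = [] \<or> \<not> snd (hd C)"
    using assms by (elim bot_factorsE) simp
  from ABC show thesis
  proof (cases rule: append3_eq_Cons_split)
    case (left A')
    have "A' = [] \<or> snd (last A')"
      using A left(1) by (cases "A' = []") auto
    moreover have "x = (str_end G (fst (ltgt G l, Y), A'), B)"
      using x left(1) by (simp add: str_end_append)
    ultimately show thesis
      using bot_factorsI[of "(ltgt G l, Y)" A' B C G] left(2) C by (intro that(2)) simp
  next
    case (right C')
    have "C' = [] \<or> \<not> snd (hd C')"
      using C right(1) by (cases C') auto
    then show thesis
      using bot_factorsI[of "(u, X)" A B C' G] x right(2) A by (intro that(1)) simp
  next
    case (middle B1 B2)
    have "(str_end G (fst (u, X), A), B1) \<in> bot_factors G (u, X)"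
      using bot_factorsI[of "(u, X)" A B1 "[]" G] middle(2) A by simp
    moreover have "(str_end G (fst (ltgt G l, Y), []), B2) \<in> bot_factors G (ltgt G l, Y)"
      using bot_factorsI[of "(ltgt G l, Y)" "[]" B2 C G] middle(3) C by simp
    ultimately show thesis
      using x middle(1) by (intro that(3)) simp_all
  qed
qed

lemma bot_factors_is_string:
  assumes "wf_bquiver G" "is_string G \<sigma>" "x \<in> bot_factors G \<sigma>"
  shows "is_string G x"
proof -
  obtain A B C where "x = (str_end G (fst \<sigma>, A), B)" "snd \<sigma> = A @ B @ C"
    using assms(3) by (elim bot_factorsE)
  then show ?thesis
    using assms(1,2) is_string_suffix[of G "fst \<sigma>" A B] is_string_prefix[of G "fst \<sigma>" "A @ B" C]
    by (cases \<sigma>) simp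
qed

lemma walk_bot_factors_bot_factors:
  assumes "\<tau> \<in> walk_bot_factors Q G \<omega>"
  shows "bot_factors G \<tau> \<subseteq> walk_bot_factors Q G \<omega>"
proof
  fix \<rho>
  assume "\<rho> \<in> bot_factors G \<tau>"
  then obtain A' B' C' where rho: "\<rho> = (str_end G (fst \<tau>, A'), B')" and tau': "snd \<tau> = A' @ B' @ C'"
    and A': "A' = [] \<or> snd (last A')" and C': "C' = [] \<or> \<not> snd (hd C')"
    by (elim bot_factorsE)
  obtain A B C where tau: "\<tau> = (str_end G (fst \<omega>, A), B)" and omega: "snd \<omega> = A @ B @ C"
    and A: "A \<noteq> []" "snd (last A)" and C: "C \<noteq> []" "\<not> snd (hd C)"
    and verts: "str_verts G (str_end G (fst \<omega>, A), B) \<subseteq> verts Q"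
    using assms by (elim walk_bot_factorsE)
  have "snd \<omega> = (A @ A') @ B' @ (C' @ C)"
    using omega tau tau' by simp
  moreover have "A @ A' \<noteq> [] \<and> snd (last (A @ A'))"
    using A A' by (cases "A' = []") auto
  moreover have "C' @ C \<noteq> [] \<and> \<not> snd (hd (C' @ C))"
    using C C' by (auto simp: hd_append)
  moreover have "\<rho> = (str_end G (fst \<omega>, A @ A'), B')"
    using rho tau by (simp add: str_end_append)
  moreover have "str_verts G (str_end G (fst \<omega>, A @ A'), B') \<subseteq> verts Q"
    using verts tau tau' by (auto simp: str_verts_append str_end_append)
  ultimately show "\<rho> \<in> walk_bot_factors Q G \<omega>"
    using walk_bot_factorsI[of \<omega> "A @ A'" B' "C' @ C" G Q] by simp
qed

lemma walk_bot_factors_inv_str: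
  assumes "string_chain G v ls" "\<tau> \<in> walk_bot_factors Q G (v, ls)"
  shows "inv_str G \<tau> \<in> walk_bot_factors Q G (inv_str G (v, ls))"
proof -
  obtain A B C where tau: "\<tau> = (str_end G (v, A), B)" and ls: "ls = A @ B @ C"
    and A: "A \<noteq> []" "snd (last A)" and C: "C \<noteq> []" "\<not> snd (hd C)"
    and verts: "str_verts G (str_end G (v, A), B) \<subseteq> verts Q"
    using assms(2) by (elim walk_bot_factorsE) simp
  let ?w = "str_end G (v, A @ B)"
  have chain_B: "string_chain G (str_end G (v, A)) B" and chain_C: "string_chain G ?w C"
    using assms(1) ls by (simp_all add: string_chain_append str_end_append del: append_assoc)
  have end_ls: "str_end G (v, ls) = str_end G (?w, C)"
    using ls by (simp add: str_end_append del: append_assoc)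
  have "inv_str G \<tau> = (str_end G (str_end G (v, ls), inv_letters C), inv_letters B)"
    using string_chain_inv_letters[OF chain_C]
    by (simp add: tau inv_str_conv end_ls str_end_append)
  moreover have "inv_str G (v, ls) = (str_end G (v, ls), inv_letters C @ inv_letters B @ inv_letters A)"
    using ls by (simp add: inv_str_conv)
  moreover have "str_verts G (inv_str G \<tau>) \<subseteq> verts Q"
    using str_verts_inv_str[OF chain_B] verts tau by simp
  moreover have "inv_letters C \<noteq> [] \<and> snd (last (inv_letters C))"
    using C by (simp add: last_inv_letters)
  moreover have "inv_letters A \<noteq> [] \<and> \<not> snd (hd (inv_letters A))"
    using A by (simp add: hd_inv_letters)
  ultimately show ?thesis
    using walk_bot_factorsI[of "inv_str G (v, ls)" "inv_letters C" "inv_letters B" "inv_letters A" G Q] by simp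
qed

section \<open>Closure and biclosed sets\<close>

lemma clos_join:
  assumes "\<tau> \<in> clos G X" "\<rho> \<in> clos G X" "ltgt G l = fst \<tau>"
    and "is_string G (fst \<rho>, snd \<rho> @ l # snd \<tau>)"
  shows "(fst \<rho>, snd \<rho> @ l # snd \<tau>) \<in> clos G X"
  using assms
proof (induction arbitrary: \<rho> l rule: clos.induct)
  case (base \<sigma>)
  then show ?case
    using string_chain_split[of G "fst \<rho>" "snd \<rho>" l "snd \<sigma>"]
    by (intro clos.join[simplified]) (auto simp: is_string_iff_chain)
next
  case (join \<rho>' \<tau>' l')
  have "is_string G (fst \<rho>, snd \<rho> @ l # snd \<rho>')"
    using join.prems(3) is_string_prefix[of G "fst \<rho>" "snd \<rho> @ l # snd \<rho>'" "[l'] @ snd \<tau>'"] by simp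
  then have "(fst \<rho>, snd \<rho> @ l # snd \<rho>') \<in> clos G X"
    using join.IH join.prems(1,2) by simp
  moreover have "lsrc G l' = str_end G (fst \<rho>, snd \<rho> @ l # snd \<rho>')"
    using join.hyps(4) join.prems(2) by (cases \<rho>') (simp add: str_end_append)
  ultimately have "(fst \<rho>, (snd \<rho> @ l # snd \<rho>') @ [l'] @ snd \<tau>') \<in> clos G X"
    using clos.join[of "(fst \<rho>, snd \<rho> @ l # snd \<rho>')" G X \<tau>' l'] join.hyps(2,3,5) join.prems(3) by simp
  then show ?case by simp
qed

lemma closed_join:
  "clos G X = X \<Longrightarrow> (w, A) \<in> X \<Longrightarrow> (ltgt G l, B) \<in> X \<Longrightarrow> is_string G (w, A @ l # B) \<Longrightarrow>
     (w, A @ l # B) \<in> X"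
  using clos.join[of "(w, A)" G X "(ltgt G l, B)" l] string_chain_split[of G w A l B]
  by (auto simp: is_string_iff_chain intro: clos.base)

lemma Bicl_join:
  "S \<in> Bicl G \<Longrightarrow> (w, A) \<in> S \<Longrightarrow> (ltgt G l, B) \<in> S \<Longrightarrow> is_string G (w, A @ l # B) \<Longrightarrow>
     (w, A @ l # B) \<in> S"
  by (rule closed_join) (auto simp: Bicl_def)

lemma Bicl_split:
  assumes "wf_bquiver G" "S \<in> Bicl G" "(w, A @ l # B) \<in> S"
  shows "(w, A) \<in> S \<or> (ltgt G l, B) \<in> S"
proof (rule ccontr)
  assume "\<not> ((w, A) \<in> S \<or> (ltgt G l, B) \<in> S)"
  moreover have "is_string G (w, A @ l # B)"
    using assms(2,3) by (auto simp: Bicl_def Strings_def)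
  ultimately have "(w, A @ l # B) \<in> Strings G - S"
    using assms(1,2) is_string_split[of G w A l B]
    by (intro closed_join) (auto simp: Bicl_def Strings_def)
  with assms(3) show False by simp
qed

section \<open>Strings of the blossoming quiver\<close>

lemma card_2_ex_not:
  "card {x \<in> A. P x} = 2 \<Longrightarrow> card {x \<in> A. P x \<and> R x} \<le> 1 \<Longrightarrow> \<exists>x\<in>A. P x \<and> \<not> R x"
proof (rule ccontr)
  assume "card {x \<in> A. P x} = 2" "card {x \<in> A. P x \<and> R x} \<le> 1" "\<not> (\<exists>x\<in>A. P x \<and> \<not> R x)"
  moreover from this(3) have "{x \<in> A. P x \<and> R x} = {x \<in> A. P x}"
    by blast
  ultimately show False by simp
qed

lemma card_2_ex_neq: "card {x \<in> A. P x} = 2 \<Longrightarrow> \<exists>x\<in>A. P x \<and> x \<noteq> a"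
proof (rule ccontr)
  assume "card {x \<in> A. P x} = 2" "\<not> (\<exists>x\<in>A. P x \<and> x \<noteq> a)"
  moreover from this(2) have "card {x \<in> A. P x} \<le> card {a}"
    by (intro card_mono) auto
  ultimately show False by simp
qed

lemma admissible_direct_chain_bound:
  assumes "admissible G"
  obtains m where "\<And>v P. string_chain G v P \<Longrightarrow> \<forall>l\<in>set P. snd l \<Longrightarrow> length P < m"
proof -
  obtain m where m: "\<And>p. is_path G p \<Longrightarrow> length p = m \<Longrightarrow> \<exists>i. Suc i < length p \<and> (p ! i, p ! Suc i) \<in> rels G"
    using assms unfolding admissible_def by blast
  have "length P < m" if chain: "string_chain G v P" and direct: "\<forall>l\<in>set P. snd l" for v P
  proof (rule ccontr)
    assume "\<not> length P < m"
    let ?p = "take m (map fst P)"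
    have nth: "fst (P ! i) \<in> arrs G \<and> lsrc G (P ! i) = vert_at G (v, P) i"
      "Suc i < length P \<Longrightarrow> letters_compatible G (P ! i) (P ! Suc i)" if "i < length P" for i
      using chain that by (simp_all add: string_chain_iff_nth)
    have P_i: "P ! i = (fst (P ! i), True)" if "i < length P" for i
      using direct that by (metis nth_mem prod.collapse)
    have "is_path G ?p"
      unfolding is_path_def
    proof (intro conjI allI impI)
      show "set ?p \<subseteq> arrs G"
        using nth(1) by (auto simp: in_set_conv_nth)
      fix i
      assume "Suc i < length ?p"
      then show "tgt G (?p ! i) = src G (?p ! Suc i)"
        using nth(1)[of i] nth(1)[of "Suc i"] P_i[of i] P_i[of "Suc i"]
        by (simp add: vert_at_def) (metis fst_conv lsrc.simps ltgt.simps)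
    qed
    moreover have "length ?p = m"
      using \<open>\<not> length P < m\<close> by simp
    ultimately obtain i where "Suc i < length ?p" "(?p ! i, ?p ! Suc i) \<in> rels G"
      using m by blast
    then show False
      using nth(2)[of i] direct by (simp add: letters_compatible_def)
  qed
  then show thesis by (rule that)
qed

locale blossoming =
  fixes Q Qb :: "('v, 'a) bquiver"
  assumes gentle_Q: "gentle Q" and blossoming_Qb: "is_blossoming Q Qb"
begin

lemma wf_Q: "wf_bquiver Q"
  using gentle_Q by (simp add: gentle_def)

lemma gentle_Qb: "gentle Qb"
  using blossoming_Qb by (simp add: is_blossoming_def)

lemma wf_Qb: "wf_bquiver Qb"
  using gentle_Qb by (simp add: gentle_def)

lemma admissible_Qb: "admissible Qb"
  using gentle_Qb by (simp add: gentle_def)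

lemma verts_subset: "verts Q \<subseteq> verts Qb"
  and arrs_subset: "arrs Q \<subseteq> arrs Qb"
  and src_Qb: "\<alpha> \<in> arrs Q \<Longrightarrow> src Qb \<alpha> = src Q \<alpha>"
  and tgt_Qb: "\<alpha> \<in> arrs Q \<Longrightarrow> tgt Qb \<alpha> = tgt Q \<alpha>"
  and rels_Qb: "\<alpha> \<in> arrs Q \<Longrightarrow> \<beta> \<in> arrs Q \<Longrightarrow> (\<alpha>, \<beta>) \<in> rels Qb \<longleftrightarrow> (\<alpha>, \<beta>) \<in> rels Q"
  and blossom_arr: "\<alpha> \<in> arrs Qb - arrs Q \<Longrightarrow> (src Qb \<alpha> \<in> verts Q) \<noteq> (tgt Qb \<alpha> \<in> verts Q)"
  and blossom_vert_degree: "b \<in> verts Qb - verts Q \<Longrightarrow> card {\<alpha>\<in>arrs Qb. src Qb \<alpha> = b \<or> tgt Qb \<alpha> = b} = 1"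
  and vert_degree: "v \<in> verts Q \<Longrightarrow>
      card {\<alpha>\<in>arrs Qb. tgt Qb \<alpha> = v} = 2 \<and> card {\<alpha>\<in>arrs Qb. src Qb \<alpha> = v} = 2"
  using blossoming_Qb by (auto simp: is_blossoming_def)

lemma arr_Qb_in_arrs_Q:
  "\<alpha> \<in> arrs Qb \<Longrightarrow> src Qb \<alpha> \<in> verts Q \<Longrightarrow> tgt Qb \<alpha> \<in> verts Q \<Longrightarrow> \<alpha> \<in> arrs Q"
  using blossom_arr by blast

lemma lsrc_Qb: "fst l \<in> arrs Q \<Longrightarrow> lsrc Qb l = lsrc Q l"
  and ltgt_Qb: "fst l \<in> arrs Q \<Longrightarrow> ltgt Qb l = ltgt Q l"
  by (cases l; simp add: src_Qb tgt_Qb)+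

lemma letters_compatible_Qb:
  "fst l \<in> arrs Q \<Longrightarrow> fst l' \<in> arrs Q \<Longrightarrow> letters_compatible Qb l l' \<longleftrightarrow> letters_compatible Q l l'"
  by (simp add: letters_compatible_def rels_Qb)

lemma string_chain_Q_Qb:
  "string_chain Q v ls \<Longrightarrow>
     string_chain Qb v ls \<and> str_end Qb (v, ls) = str_end Q (v, ls) \<and> str_verts Qb (v, ls) = str_verts Q (v, ls)"
proof (induction ls arbitrary: v)
  case Nil
  then show ?case by (simp add: str_verts_def)
next
  case (Cons l ls)
  moreover have "ls \<noteq> [] \<Longrightarrow> fst (hd ls) \<in> arrs Q"
    using Cons.prems by (cases ls) auto
  ultimately show ?case
    using arrs_subset by (auto simp: str_verts_Cons lsrc_Qb ltgt_Qb letters_compatible_Qb)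
qed

lemma string_chain_Qb_Q: "string_chain Qb v ls \<Longrightarrow> str_verts Qb (v, ls) \<subseteq> verts Q \<Longrightarrow> string_chain Q v ls"
proof (induction ls arbitrary: v)
  case Nil
  then show ?case by simp
next
  case (Cons l ls)
  then have "fst l \<in> arrs Q"
    using arr_Qb_in_arrs_Q by (cases l; cases "snd l") (auto simp: str_verts_Cons str_verts_def)
  moreover have "string_chain Q (ltgt Qb l) ls"
    using Cons by (simp add: str_verts_Cons)
  moreover from this have "ls \<noteq> [] \<Longrightarrow> fst (hd ls) \<in> arrs Q"
    by (cases ls) auto
  ultimately show ?case
    using Cons.prems by (auto simp: lsrc_Qb ltgt_Qb letters_compatible_Qb)
qed

lemma is_string_Q_Qb: "is_string Q \<sigma> \<Longrightarrow> is_string Qb \<sigma>"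
  using string_chain_Q_Qb verts_subset by (cases \<sigma>) (auto simp: is_string_iff_chain)

lemma is_string_Qb_Q: "is_string Qb \<sigma> \<Longrightarrow> str_verts Qb \<sigma> \<subseteq> verts Q \<Longrightarrow> is_string Q \<sigma>"
  using string_chain_Qb_Q by (cases \<sigma>) (auto simp: is_string_iff_chain str_verts_def)

lemma str_verts_Qb_subset: "is_string Q \<sigma> \<Longrightarrow> str_verts Qb \<sigma> \<subseteq> verts Q"
  using string_chain_Q_Qb str_verts_subset[OF wf_Q] by (cases \<sigma>) (auto simp: is_string_iff_chain)

lemma str_end_Qb: "is_string Q (v, ls) \<Longrightarrow> str_end Qb (v, ls) = str_end Q (v, ls)"
  using string_chain_Q_Qb by (simp add: is_string_iff_chain)

lemma inv_str_Qb: "is_string Q \<sigma> \<Longrightarrow> inv_str Qb \<sigma> = inv_str Q \<sigma>"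
  using str_end_Qb by (cases \<sigma>) (simp add: inv_str_conv)

lemma walk_bot_factors_is_string:
  assumes "is_string Qb \<omega>" "\<tau> \<in> walk_bot_factors Q Qb \<omega>"
  shows "is_string Q \<tau>"
proof -
  obtain A B C where \<tau>: "\<tau> = (str_end Qb (fst \<omega>, A), B)" and "snd \<omega> = A @ B @ C"
    and verts: "str_verts Qb \<tau> \<subseteq> verts Q"
    using assms(2) by (elim walk_bot_factorsE) simp
  then have "is_string Qb (fst \<omega>, A @ B)"
    using assms(1) is_string_prefix[of Qb "fst \<omega>" "A @ B" C] by (cases \<omega>) simp
  then have "is_string Qb \<tau>"
    unfolding \<tau> by (rule is_string_suffix[OF wf_Qb])
  then show ?thesis
    using verts by (rule is_string_Qb_Q)
qed

lemma bot_factors_Qb: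
  assumes "is_string Q (v, ls)"
  shows "bot_factors Qb (v, ls) = bot_factors Q (v, ls)"
proof -
  have "str_end Qb (v, A) = str_end Q (v, A)" if "ls = A @ D" for A D
    using assms that is_string_prefix[of Q v A D] str_end_Qb by simp
  then show ?thesis
    unfolding bot_factors_def fst_conv snd_conv by (intro Collect_cong ex_cong1) auto
qed

lemma letter_from_exists:
  assumes "v \<in> verts Q"
  shows "\<exists>l. snd l = d \<and> fst l \<in> arrs Qb \<and> lsrc Qb l = v"
proof (cases d)
  case True
  with card_2_ex_neq[of "arrs Qb" "\<lambda>\<alpha>. src Qb \<alpha> = v"] vert_degree[OF assms]
  show ?thesis by (metis fst_conv lsrc.simps snd_conv)
next
  case False
  with card_2_ex_neq[of "arrs Qb" "\<lambda>\<alpha>. tgt Qb \<alpha> = v"] vert_degree[OF assms]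
  show ?thesis by (metis fst_conv lsrc.simps snd_conv)
qed

text \<open>At a vertex of \<open>Q\<close> the blossoming quiver has two incoming and two outgoing arrows,
  so by gentleness every letter ending there can be continued in both orientations.\<close>
lemma compatible_letter_exists:
  assumes a: "a \<in> arrs Qb" and w: "ltgt Qb (a, e) \<in> verts Q"
  shows "\<exists>l. snd l = d \<and> fst l \<in> arrs Qb \<and> lsrc Qb l = ltgt Qb (a, e) \<and> letters_compatible Qb (a, e) l"
proof -
  let ?w = "ltgt Qb (a, e)"
  have deg: "card {\<alpha>\<in>arrs Qb. tgt Qb \<alpha> = ?w} = 2" "card {\<alpha>\<in>arrs Qb. src Qb \<alpha> = ?w} = 2"
    using vert_degree[OF w] by auto
  have rel: "card {\<alpha>\<in>arrs Qb. tgt Qb \<alpha> = src Qb a \<and> (\<alpha>, a) \<in> rels Qb} \<le> 1"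
    "card {\<gamma>\<in>arrs Qb. src Qb \<gamma> = tgt Qb a \<and> (a, \<gamma>) \<in> rels Qb} \<le> 1"
    using gentle_Qb a by (simp_all add: gentle_def)
  show ?thesis
  proof (cases e; cases d)
    assume e and d
    then obtain x where "x \<in> arrs Qb" "src Qb x = tgt Qb a" "(a, x) \<notin> rels Qb"
      using card_2_ex_not[OF _ rel(2)] deg(2) by auto
    with \<open>e\<close> \<open>d\<close> show ?thesis
      by (intro exI[of _ "(x, True)"]) (auto simp: letters_compatible_def)
  next
    assume e and "\<not> d"
    then obtain x where "x \<in> arrs Qb" "tgt Qb x = ?w" "x \<noteq> a"
      using card_2_ex_neq[OF deg(1)] by blast
    with \<open>e\<close> \<open>\<not> d\<close> show ?thesis
      by (intro exI[of _ "(x, False)"]) (auto simp: letters_compatible_def)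
  next
    assume "\<not> e" and d
    then obtain x where "x \<in> arrs Qb" "src Qb x = ?w" "x \<noteq> a"
      using card_2_ex_neq[OF deg(2)] by blast
    with \<open>\<not> e\<close> \<open>d\<close> show ?thesis
      by (intro exI[of _ "(x, True)"]) (auto simp: letters_compatible_def)
  next
    assume "\<not> e" and "\<not> d"
    then obtain x where "x \<in> arrs Qb" "tgt Qb x = src Qb a" "(x, a) \<notin> rels Qb"
      using card_2_ex_not[OF _ rel(1)] deg(1) by auto
    with \<open>\<not> e\<close> \<open>\<not> d\<close> show ?thesis
      by (intro exI[of _ "(x, False)"]) (auto simp: letters_compatible_def)
  qed
qed

lemma is_string_snoc_exists:
  assumes s: "is_string Qb (u, L)" and w: "str_end Qb (u, L) \<in> verts Q"
  shows "\<exists>l. snd l = d \<and> is_string Qb (u, L @ [l])"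
proof (cases L rule: rev_cases)
  case Nil
  then show ?thesis
    using s w letter_from_exists by (auto simp: is_string_iff_chain)
next
  case (snoc L' a)
  then have "fst a \<in> arrs Qb" "ltgt Qb a \<in> verts Q"
    using s w by (auto simp: is_string_iff_chain string_chain_append str_end_conv)
  then obtain l where "snd l = d" "fst l \<in> arrs Qb" "lsrc Qb l = ltgt Qb a" "letters_compatible Qb a l"
    using compatible_letter_exists[of "fst a" "snd a" d] unfolding prod.collapse by blast
  then show ?thesis
    using s snoc by (intro exI[of _ l]) (auto simp: is_string_iff_chain string_chain_append str_end_conv)
qed

lemma is_string_Cons_exists:
  assumes s: "is_string Qb (u, L)" and u: "u \<in> verts Q"
  shows "\<exists>l. snd l = d \<and> ltgt Qb l = u \<and> is_string Qb (lsrc Qb l, l # L)"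
proof -
  have chain: "string_chain Qb u L"
    using s by (simp add: is_string_iff_chain)
  then have end_inv: "str_end Qb (inv_str Qb (u, L)) = u"
    using string_chain_inv_letters[of Qb u L] by (simp add: inv_str_conv)
  obtain l where l: "snd l = (\<not> d)" "is_string Qb (fst (inv_str Qb (u, L)), snd (inv_str Qb (u, L)) @ [l])"
    using is_string_snoc_exists[of "fst (inv_str Qb (u, L))" "snd (inv_str Qb (u, L))" "\<not> d"]
      is_string_inv_str[OF wf_Qb s] end_inv u by auto
  then have "lsrc Qb l = u"
    using end_inv by (simp add: inv_str_conv is_string_iff_chain string_chain_append)
  moreover have "is_string Qb (lsrc Qb (inv_letter l), inv_letter l # L)"
    using is_string_inv_str[OF wf_Qb l(2)] inv_str_inv_str[OF chain]
    by (simp add: inv_str_conv str_end_append)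
  ultimately show ?thesis
    using l(1) by (intro exI[of _ "inv_letter l"]) simp
qed

text \<open>A blossom vertex has a single incident arrow, so a string cannot pass through it.\<close>
lemma blossom_end_not_extendable:
  assumes s: "is_string Qb (u, L)" and "L \<noteq> []" and b: "str_end Qb (u, L) \<notin> verts Q"
  shows "\<not> is_string Qb (u, L @ [l])"
proof
  assume s': "is_string Qb (u, L @ [l])"
  let ?b = "str_end Qb (u, L)"
  obtain L' a e where L: "L = L' @ [(a, e)]"
    using \<open>L \<noteq> []\<close> by (metis prod.collapse rev_exhaust)
  have a: "a \<in> arrs Qb"
    using s by (simp add: L is_string_iff_chain string_chain_append)
  have b_ae: "?b = ltgt Qb (a, e)"
    by (simp add: L str_end_append)
  have l: "fst l \<in> arrs Qb" "lsrc Qb l = ?b" "letters_compatible Qb (a, e) l"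
    using s' by (auto simp: L is_string_iff_chain string_chain_append str_end_append)
  have "?b \<in> verts Qb"
    using s str_end_in_verts[OF wf_Qb] by (auto simp: is_string_iff_chain)
  then have "card {\<alpha>\<in>arrs Qb. src Qb \<alpha> = ?b \<or> tgt Qb \<alpha> = ?b} = 1"
    using blossom_vert_degree b by simp
  moreover have "a \<in> {\<alpha>\<in>arrs Qb. src Qb \<alpha> = ?b \<or> tgt Qb \<alpha> = ?b}"
    using a b_ae by (cases e) auto
  moreover have "fst l \<in> {\<alpha>\<in>arrs Qb. src Qb \<alpha> = ?b \<or> tgt Qb \<alpha> = ?b}"
    using l by (cases l; cases "snd l") auto
  ultimately have "fst l = a"
    by (metis card_1_singletonE singletonD)
  then have loop: "src Qb a = ?b" "tgt Qb a = ?b"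
    using l b_ae by (cases l; cases e; auto simp: letters_compatible_def)+
  show False
  proof (cases "a \<in> arrs Q")
    case True
    then show False
      using loop b wf_Q src_Qb by (metis wf_bquiver_def)
  next
    case False
    then show False
      using loop a blossom_arr[of a] by simp
  qed
qed

lemma blossom_start_not_extendable:
  assumes s: "is_string Qb (u, L)" and "L \<noteq> []" and u: "u \<notin> verts Q"
  shows "\<not> is_string Qb (lsrc Qb l, l # L)"
proof
  assume s': "is_string Qb (lsrc Qb l, l # L)"
  have chain: "string_chain Qb u L"
    using s by (simp add: is_string_iff_chain)
  have "ltgt Qb l = u"
    using s s' \<open>L \<noteq> []\<close> by (cases L) (auto simp: is_string_iff_chain)
  then have "is_string Qb (str_end Qb (u, L), inv_letters L @ [inv_letter l])"
    using is_string_inv_str[OF wf_Qb s'] by (simp add: inv_str_conv)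
  moreover have "is_string Qb (str_end Qb (u, L), inv_letters L)"
    using is_string_inv_str[OF wf_Qb s] by (simp add: inv_str_conv)
  ultimately show False
    using blossom_end_not_extendable[of "str_end Qb (u, L)" "inv_letters L"]
      string_chain_inv_letters[OF chain] \<open>L \<noteq> []\<close> u by simp
qed

lemma is_string_extend_to_blossom:
  assumes s: "is_string Qb (u, L)"
  obtains P where "is_string Qb (u, L @ P)" "str_end Qb (u, L @ P) \<notin> verts Q"
proof -
  obtain m where m: "\<And>v P. string_chain Qb v P \<Longrightarrow> \<forall>l\<in>set P. snd l \<Longrightarrow> length P < m"
    using admissible_direct_chain_bound[OF admissible_Qb] by blast
  define extends where
    "extends n \<longleftrightarrow> (\<exists>P. length P = n \<and> (\<forall>l\<in>set P. snd l) \<and> is_string Qb (u, L @ P))" for n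
  have "extends 0"
    using s by (simp add: extends_def)
  moreover have "n \<le> m" if "extends n" for n
    using that m by (fastforce simp: extends_def is_string_iff_chain string_chain_append)
  ultimately obtain n where n: "extends n" "\<And>k. extends k \<Longrightarrow> k \<le> n"
    using Nat.ex_has_greatest_nat[of extends 0 m] by blast
  then obtain P where P: "length P = n" "\<forall>l\<in>set P. snd l" "is_string Qb (u, L @ P)"
    by (auto simp: extends_def)
  have "str_end Qb (u, L @ P) \<notin> verts Q"
  proof
    assume "str_end Qb (u, L @ P) \<in> verts Q"
    then obtain l where "snd l" "is_string Qb (u, L @ P @ [l])"
      using is_string_snoc_exists[OF P(3), of True] by auto
    then have "extends (Suc n)"
      using P(1,2) unfolding extends_def by (intro exI[of _ "P @ [l]"]) auto
    then show False
      using n(2) by fastforce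
  qed
  then show thesis
    using P(3) that by blast
qed

lemma is_string_factor_of_walk:
  assumes s: "is_string Qb (u, L)" and "L \<noteq> []"
  obtains \<omega> A C where "is_walk Qb \<omega>" "snd \<omega> = A @ L @ C"
proof -
  obtain P where P: "is_string Qb (u, L @ P)" "str_end Qb (u, L @ P) \<notin> verts Q"
    using is_string_extend_to_blossom[OF s] by blast
  let ?e = "str_end Qb (u, L @ P)"
  have "is_string Qb (?e, inv_letters (L @ P))"
    using is_string_inv_str[OF wf_Qb P(1)] by (simp add: inv_str_conv)
  then obtain P' where P': "is_string Qb (?e, inv_letters (L @ P) @ P')"
    "str_end Qb (?e, inv_letters (L @ P) @ P') \<notin> verts Q"
    using is_string_extend_to_blossom by blast
  define \<omega> where "\<omega> = inv_str Qb (?e, inv_letters (L @ P) @ P')"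
  have chain: "string_chain Qb ?e (inv_letters (L @ P) @ P')"
    using P'(1) by (simp add: is_string_iff_chain)
  have \<omega>: "\<omega> = (str_end Qb (?e, inv_letters (L @ P) @ P'), inv_letters P' @ L @ P)"
    by (simp add: \<omega>_def inv_str_conv)
  have s\<omega>: "is_string Qb \<omega>"
    unfolding \<omega>_def by (rule is_string_inv_str[OF wf_Qb P'(1)])
  have "str_end Qb \<omega> = ?e"
    using string_chain_inv_letters[OF chain] by (simp add: \<omega>_def inv_str_conv)
  then have "\<not> is_string Qb (fst \<omega>, snd \<omega> @ [l])" for l
    using blossom_end_not_extendable[of "fst \<omega>" "snd \<omega>"] s\<omega> P(2) \<open>L \<noteq> []\<close> \<omega> by simp
  moreover have "\<not> is_string Qb (lsrc Qb l, l # snd \<omega>)" for l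
    using blossom_start_not_extendable[of "fst \<omega>" "snd \<omega>"] s\<omega> P'(2) \<open>L \<noteq> []\<close> \<omega> by simp
  ultimately have "is_walk Qb \<omega>"
    using s\<omega> by (simp add: is_walk_def)
  then show thesis
    using \<omega> that by simp
qed

end

locale finite_blossoming = blossoming +
  assumes finite_reduced: "finite_reduced_complex Qb"
begin

lemma walk_length_bound: "\<exists>N. \<forall>\<omega>. is_walk Qb \<omega> \<longrightarrow> length (snd \<omega>) \<le> N"
proof -
  obtain m where m: "\<And>v P. string_chain Qb v P \<Longrightarrow> \<forall>l\<in>set P. snd l \<Longrightarrow> length P < m"
    using admissible_direct_chain_bound[OF admissible_Qb] by blast
  let ?F = "{\<omega>. is_walk Qb \<omega> \<and> \<not> straight \<omega>}"
  have fin: "finite ?F"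
    using finite_reduced by (simp add: finite_reduced_complex_def)
  define N where "N = max m (Max (insert 0 ((\<lambda>\<omega>. length (snd \<omega>)) ` ?F)))"
  have "length (snd \<omega>) \<le> N" if w: "is_walk Qb \<omega>" for \<omega>
  proof (cases "straight \<omega>")
    case False
    then have "length (snd \<omega>) \<le> Max (insert 0 ((\<lambda>\<omega>. length (snd \<omega>)) ` ?F))"
      using fin w by (intro Max_ge) auto
    then show ?thesis
      unfolding N_def by linarith
  next
    case True
    obtain v ls where \<omega>: "\<omega> = (v, ls)"
      by (cases \<omega>)
    have chain: "string_chain Qb v ls"
      using w \<omega> by (simp add: is_walk_def is_string_iff_chain)
    consider "\<forall>l\<in>set ls. snd l" | "\<forall>l\<in>set (inv_letters ls). snd l"
      using True \<omega> by (auto simp: straight_def set_inv_letters)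
    then have "length ls < m"
      using m[OF chain] m[OF conjunct1[OF string_chain_inv_letters[OF chain]]] by cases auto
    then show ?thesis
      unfolding N_def \<omega> by simp
  qed
  then show ?thesis by blast
qed

lemma string_length_bound: "\<exists>N. \<forall>u L. is_string Qb (u, L) \<longrightarrow> length L \<le> N"
proof -
  obtain N where N: "\<And>\<omega>. is_walk Qb \<omega> \<Longrightarrow> length (snd \<omega>) \<le> N"
    using walk_length_bound by blast
  have "length L \<le> N" if s: "is_string Qb (u, L)" for u L
  proof (cases "L = []")
    case False
    then obtain \<omega> A C where "is_walk Qb \<omega>" "snd \<omega> = A @ L @ C"
      using is_string_factor_of_walk[OF s] by blast
    with N show ?thesis by fastforce
  qed simp
  then show ?thesis by blast
qed

end

section \<open>The walks \<open>\<omega>(\<beta>, S)\<close>\<close>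

definition post_signs :: "('v, 'a) bquiver \<Rightarrow> ('v, 'a) str set \<Rightarrow> 'a \<Rightarrow> 'a letter list \<Rightarrow> bool" where
  "post_signs Qb S \<beta> post \<longleftrightarrow> (\<forall>i<length post. (\<not> snd (post ! i)) \<longleftrightarrow> (tgt Qb \<beta>, take i post) \<in> S)"

definition pre_signs :: "('v, 'a) bquiver \<Rightarrow> ('v, 'a) str set \<Rightarrow> 'a letter list \<Rightarrow> bool" where
  "pre_signs Qb S pre \<longleftrightarrow> (\<forall>k<length pre. snd (pre ! k) \<longleftrightarrow> (ltgt Qb (pre ! k), drop (Suc k) pre) \<in> S)"

lemma is_omega_iff:
  "is_omega Qb S \<beta> \<omega> \<longleftrightarrow> is_walk Qb \<omega>
     \<and> (\<exists>pre post. snd \<omega> = pre @ [(\<beta>, True)] @ post \<and> post_signs Qb S \<beta> post \<and> pre_signs Qb S pre)"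
  unfolding is_omega_def post_signs_def pre_signs_def ..

lemma post_signs_snoc:
  "post_signs Qb S \<beta> X \<Longrightarrow> (\<not> snd l \<longleftrightarrow> (tgt Qb \<beta>, X) \<in> S) \<Longrightarrow> post_signs Qb S \<beta> (X @ [l])"
  unfolding post_signs_def by (auto simp: nth_append less_Suc_eq)

lemma pre_signs_Cons:
  "pre_signs Qb S X \<Longrightarrow> (snd l \<longleftrightarrow> (ltgt Qb l, X) \<in> S) \<Longrightarrow> pre_signs Qb S (l # X)"
  unfolding pre_signs_def by (auto simp: less_Suc_eq_0_disj)

lemma post_signs_at: "post_signs Qb S \<beta> (X @ l # Y) \<Longrightarrow> \<not> snd l \<longleftrightarrow> (tgt Qb \<beta>, X) \<in> S"
  unfolding post_signs_def by (drule spec[of _ "length X"]) simp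

lemma pre_signs_at: "pre_signs Qb S (X @ l # Y) \<Longrightarrow> snd l \<longleftrightarrow> (ltgt Qb l, Y) \<in> S"
  unfolding pre_signs_def by (drule spec[of _ "length X"]) (simp add: nth_append)

text \<open>At a vertex of \<open>Q\<close> a string can be continued by a letter of either orientation, and
  at a blossom vertex not at all; so a string that admits no sign-consistent continuation is a walk.\<close>
lemma (in blossoming) sign_consistent_maximal_is_omega:
  assumes s: "is_string Qb (s, pre @ (\<beta>, True) # post)"
    and signs: "pre_signs Qb S pre" "post_signs Qb S \<beta> post"
    and no_snoc: "\<And>l. post_signs Qb S \<beta> (post @ [l]) \<Longrightarrow> \<not> is_string Qb (s, pre @ (\<beta>, True) # post @ [l])"
    and no_Cons: "\<And>l. pre_signs Qb S (l # pre) \<Longrightarrow> \<not> is_string Qb (lsrc Qb l, l # pre @ (\<beta>, True) # post)"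
  shows "is_omega Qb S \<beta> (s, pre @ (\<beta>, True) # post)"
proof -
  let ?X = "pre @ (\<beta>, True) # post"
  have "\<not> is_string Qb (s, ?X @ [l])" for l
  proof
    assume "is_string Qb (s, ?X @ [l])"
    then have "str_end Qb (s, ?X) \<in> verts Q"
      using blossom_end_not_extendable[OF s] by blast
    then obtain l' where "\<not> snd l' \<longleftrightarrow> (tgt Qb \<beta>, post) \<in> S" "is_string Qb (s, ?X @ [l'])"
      using is_string_snoc_exists[OF s] by blast
    then show False
      using no_snoc post_signs_snoc[OF signs(2)] by simp
  qed
  moreover have "\<not> is_string Qb (lsrc Qb l, l # ?X)" for l
  proof
    assume "is_string Qb (lsrc Qb l, l # ?X)"
    then have "s \<in> verts Q"
      using blossom_start_not_extendable[OF s] by blast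
    then obtain l' where "snd l' \<longleftrightarrow> (s, pre) \<in> S" "ltgt Qb l' = s" "is_string Qb (lsrc Qb l', l' # ?X)"
      using is_string_Cons_exists[OF s] by blast
    then show False
      using no_Cons pre_signs_Cons[OF signs(1)] by simp
  qed
  ultimately have "is_walk Qb (s, ?X)"
    using s by (simp add: is_walk_def)
  then show ?thesis
    using signs unfolding is_omega_iff by (intro conjI exI[of _ pre] exI[of _ post]) simp_all
qed

lemma (in finite_blossoming) omega_through_exists:
  assumes "is_string Qb (src Qb \<beta>, (\<beta>, True) # R)" "post_signs Qb S \<beta> R"
  obtains \<omega> pre post where "is_omega Qb S \<beta> \<omega>" "snd \<omega> = pre @ (\<beta>, True) # R @ post"
proof -
  obtain N where N: "\<And>u L. is_string Qb (u, L) \<Longrightarrow> length L \<le> N"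
    using string_length_bound by blast
  define extends where "extends n \<longleftrightarrow> (\<exists>s pre post. length pre + length post = n
     \<and> is_string Qb (s, pre @ (\<beta>, True) # R @ post) \<and> pre_signs Qb S pre \<and> post_signs Qb S \<beta> (R @ post))"
    for n
  have "extends 0"
    using assms unfolding extends_def by (intro exI[of _ "src Qb \<beta>"] exI[of _ "[]"]) (simp add: pre_signs_def)
  moreover have "n \<le> N" if "extends n" for n
    using that N unfolding extends_def by fastforce
  ultimately obtain n where n: "extends n" "\<And>k. extends k \<Longrightarrow> k \<le> n"
    using Nat.ex_has_greatest_nat[of extends 0 N] by blast
  then obtain s pre post where P: "length pre + length post = n"
    "is_string Qb (s, pre @ (\<beta>, True) # R @ post)" "pre_signs Qb S pre" "post_signs Qb S \<beta> (R @ post)"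
    unfolding extends_def by blast
  have "is_omega Qb S \<beta> (s, pre @ (\<beta>, True) # R @ post)"
  proof (rule sign_consistent_maximal_is_omega[OF P(2-4)])
    fix l
    assume "post_signs Qb S \<beta> ((R @ post) @ [l])"
    then have "\<not> extends (Suc n)"
      using n(2) by fastforce
    then show "\<not> is_string Qb (s, pre @ (\<beta>, True) # (R @ post) @ [l])"
      using P \<open>post_signs Qb S \<beta> ((R @ post) @ [l])\<close> unfolding extends_def
      by (metis append.assoc length_append_singleton add_Suc_right)
  next
    fix l
    assume "pre_signs Qb S (l # pre)"
    then show "\<not> is_string Qb (lsrc Qb l, l # pre @ (\<beta>, True) # R @ post)"
      using P n(2) unfolding extends_def by fastforce
  qed
  then show thesis
    using that by simp
qed

section \<open>The two inclusions\<close>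

locale biclosed_blossoming = blossoming +
  fixes S :: "('v, 'a) str set"
  assumes biclosed: "S \<in> Bicl Q"
begin

lemma is_string_if_mem: "x \<in> S \<Longrightarrow> is_string Q x"
  using biclosed by (auto simp: Bicl_def Strings_def)

lemma inv_str_mem: "x \<in> S \<Longrightarrow> inv_str Q x \<in> S"
  using biclosed by (auto simp: Bicl_def)

lemma pi_down_iff: "\<sigma> \<in> pi_down Q S \<longleftrightarrow> is_string Q \<sigma> \<and> bot_factors Q \<sigma> \<subseteq> S"
  using inv_str_mem by (auto simp: pi_down_def Strings_def sigma_bot_str_eq sym_cl_def)

lemma omega_factor_after_arrow:
  assumes "post_signs Qb S \<beta> (A' @ B @ c # C)" "\<not> snd c" "A' = [] \<or> snd (last A')"
  shows "(str_end Qb (tgt Qb \<beta>, A'), B) \<in> S"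
proof (cases A' rule: rev_cases)
  case Nil
  then show ?thesis
    using post_signs_at[OF assms(1)[unfolded append_assoc[symmetric]]] assms(2) by simp
next
  case (snoc A1 a)
  have "(tgt Qb \<beta>, A1 @ a # B) \<in> S"
    using post_signs_at[of Qb S \<beta> "A1 @ a # B" c C] assms(1,2) snoc by simp
  moreover have "(tgt Qb \<beta>, A1) \<notin> S"
    using post_signs_at[of Qb S \<beta> A1 a "B @ c # C"] assms(1,3) snoc by simp
  ultimately have "(ltgt Q a, B) \<in> S"
    using Bicl_split[OF wf_Q biclosed] by blast
  moreover have "fst a \<in> arrs Q"
    using is_string_split[OF wf_Q is_string_if_mem[OF \<open>(tgt Qb \<beta>, A1 @ a # B) \<in> S\<close>]] by simp
  ultimately show ?thesis
    using snoc by (simp add: str_end_append ltgt_Qb)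
qed

lemma omega_factor_before_arrow:
  assumes "pre_signs Qb S (A0 @ a # B @ c # C)" "snd a" "\<not> snd c"
  shows "(ltgt Qb a, B) \<in> S"
proof -
  have in_S: "(ltgt Qb a, B @ c # C) \<in> S"
    using pre_signs_at[OF assms(1)] assms(2) by simp
  moreover have "(ltgt Qb c, C) \<notin> S"
    using pre_signs_at[of Qb S "A0 @ a # B" c C] assms(1,3) by simp
  moreover have "fst c \<in> arrs Q"
    using is_string_split[OF wf_Q is_string_if_mem[OF in_S]] by simp
  ultimately show ?thesis
    using Bicl_split[OF wf_Q biclosed in_S] by (simp add: ltgt_Qb)
qed

lemma omega_factor_through_arrow:
  assumes "pre_signs Qb S (A0 @ a # B1)" "snd a" "post_signs Qb S \<beta> (B2 @ c # C)" "\<not> snd c"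
    and "is_string Q (ltgt Qb a, B1 @ (\<beta>, True) # B2)"
  shows "(ltgt Qb a, B1 @ (\<beta>, True) # B2) \<in> S"
proof (rule Bicl_join[OF biclosed])
  show "(ltgt Qb a, B1) \<in> S"
    using pre_signs_at[OF assms(1)] assms(2) by simp
  have "\<beta> \<in> arrs Q"
    using is_string_split[OF wf_Q assms(5)] by simp
  moreover have "(tgt Qb \<beta>, B2) \<in> S"
    using post_signs_at[OF assms(3)] assms(4) by blast
  ultimately show "(ltgt Q (\<beta>, True), B2) \<in> S"
    by (simp add: tgt_Qb)
qed (rule assms(5))

lemma omega_walk_bot_factors_subset:
  assumes "is_omega Qb S \<beta> \<omega>"
  shows "walk_bot_factors Q Qb \<omega> \<subseteq> S"
proof
  fix \<tau>
  assume \<tau>_mem: "\<tau> \<in> walk_bot_factors Q Qb \<omega>"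
  obtain pre post where walk: "is_walk Qb \<omega>" and \<omega>: "snd \<omega> = pre @ (\<beta>, True) # post"
    and post: "post_signs Qb S \<beta> post" and pre: "pre_signs Qb S pre"
    using assms unfolding is_omega_iff by auto
  obtain A B C where \<tau>: "\<tau> = (str_end Qb (fst \<omega>, A), B)" and ABC: "A @ B @ C = pre @ (\<beta>, True) # post"
    and A: "A \<noteq> []" "snd (last A)" and C: "C \<noteq> []" "\<not> snd (hd C)"
    using \<tau>_mem \<omega> by (elim walk_bot_factorsE) auto
  obtain A0 a where A_eq: "A = A0 @ [a]"
    using A(1) by (cases A rule: rev_cases) auto
  obtain c C1 where C_eq: "C = c # C1"
    using C(1) by (cases C) auto
  have fst_\<tau>: "fst \<tau> = ltgt Qb a"
    using \<tau> A_eq by (simp add: str_end_append)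
  from ABC show "\<tau> \<in> S"
  proof (cases rule: append3_eq_Cons_split)
    case (left A')
    then have "A' = [] \<or> snd (last A')"
      using A(2) by (cases "A' = []") auto
    then show ?thesis
      using omega_factor_after_arrow[of \<beta> A' B c C1] post left C C_eq \<tau>
      by (simp add: str_end_append)
  next
    case (right C')
    then obtain C2 where "C' = c # C2"
      using C C_eq by (cases C') auto
    then show ?thesis
      using omega_factor_before_arrow[of A0 a B c C2] pre right A A_eq C C_eq \<tau> fst_\<tau>
      by (cases \<tau>) simp
  next
    case (middle B1 B2)
    have "is_string Qb \<omega>"
      using walk by (simp add: is_walk_def)
    then have "is_string Q \<tau>"
      using walk_bot_factors_is_string \<tau>_mem by blast
    then show ?thesis
      using omega_factor_through_arrow[of A0 a B1 \<beta> B2 c C1] pre post middle A A_eq C_eq C \<tau> fst_\<tau>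
      by (cases \<tau>) simp
  qed
qed

lemma walk_bot_factors_inv_str_subset:
  assumes "is_string Qb \<omega>" "walk_bot_factors Q Qb \<omega> \<subseteq> S"
  shows "walk_bot_factors Q Qb (inv_str Qb \<omega>) \<subseteq> S"
proof
  fix \<tau>
  assume \<tau>_mem: "\<tau> \<in> walk_bot_factors Q Qb (inv_str Qb \<omega>)"
  obtain v ls where \<omega>: "\<omega> = (v, ls)"
    by (cases \<omega>)
  have chain: "string_chain Qb v ls"
    using assms(1) \<omega> by (simp add: is_string_iff_chain)
  then have chain_inv: "string_chain Qb (fst (inv_str Qb \<omega>)) (snd (inv_str Qb \<omega>))"
    using string_chain_inv_letters[OF chain] \<omega> by (simp add: inv_str_conv)
  have \<tau>_Q: "is_string Q \<tau>"
    using walk_bot_factors_is_string[OF is_string_inv_str[OF wf_Qb assms(1)] \<tau>_mem] .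
  have "inv_str Qb \<tau> \<in> walk_bot_factors Q Qb \<omega>"
    using walk_bot_factors_inv_str[OF chain_inv] \<tau>_mem inv_str_inv_str[OF chain] \<omega> by simp
  then have "inv_str Qb \<tau> \<in> S"
    using assms(2) by blast
  then have "inv_str Q (inv_str Qb \<tau>) \<in> S"
    by (rule inv_str_mem)
  moreover have "inv_str Q (inv_str Qb \<tau>) = \<tau>"
    using \<tau>_Q inv_str_Qb[OF \<tau>_Q] inv_str_inv_str[of Q "fst \<tau>" "snd \<tau>"]
    by (cases \<tau>) (simp add: is_string_iff_chain)
  ultimately show "\<tau> \<in> S"
    by simp
qed

lemma walk_bot_factors_subset_pi_down:
  assumes "is_string Qb \<omega>" "walk_bot_factors Q Qb \<omega> \<subseteq> S"
  shows "walk_bot_factors Q Qb \<omega> \<subseteq> pi_down Q S"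
proof
  fix \<tau>
  assume \<tau>_mem: "\<tau> \<in> walk_bot_factors Q Qb \<omega>"
  then have \<tau>_Q: "is_string Q \<tau>"
    using walk_bot_factors_is_string[OF assms(1)] by blast
  have "bot_factors Q \<tau> \<subseteq> S"
    using bot_factors_Qb[of "fst \<tau>" "snd \<tau>"] \<tau>_Q walk_bot_factors_bot_factors[OF \<tau>_mem] assms(2) by simp
  with \<tau>_Q show "\<tau> \<in> pi_down Q S"
    by (simp add: pi_down_iff)
qed

lemma sigma_bot_walk_subset_pi_down:
  assumes "is_string Qb \<omega>" "walk_bot_factors Q Qb \<omega> \<subseteq> S"
  shows "sigma_bot_walk Q Qb \<omega> \<subseteq> pi_down Q S"
proof -
  obtain v ls where \<omega>: "\<omega> = (v, ls)"
    by (cases \<omega>)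
  have "inv_str Qb ` walk_bot_factors Q Qb \<omega> \<subseteq> walk_bot_factors Q Qb (inv_str Qb \<omega>)"
    using walk_bot_factors_inv_str assms(1) \<omega> by (auto simp: is_string_iff_chain)
  also have "\<dots> \<subseteq> pi_down Q S"
    using walk_bot_factors_subset_pi_down is_string_inv_str[OF wf_Qb assms(1)]
      walk_bot_factors_inv_str_subset[OF assms] by blast
  finally show ?thesis
    using walk_bot_factors_subset_pi_down[OF assms] by (simp add: sigma_bot_walk_eq sym_cl_def)
qed

lemma eta_walk_bot_factors_subset:
  assumes "\<omega> \<in> eta Qb S"
  shows "is_string Qb \<omega> \<and> walk_bot_factors Q Qb \<omega> \<subseteq> S"
proof -
  obtain \<beta> \<omega>0 where \<omega>0: "is_omega Qb S \<beta> \<omega>0" and "\<omega> = \<omega>0 \<or> \<omega> = inv_str Qb \<omega>0"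
    using assms unfolding eta_def sym_cl_def by blast
  moreover have "is_string Qb \<omega>0"
    using \<omega>0 by (simp add: is_omega_def is_walk_def)
  ultimately show ?thesis
    using omega_walk_bot_factors_subset walk_bot_factors_inv_str_subset is_string_inv_str[OF wf_Qb] by blast
qed

lemma pi_down_join:
  assumes "(u, X) \<in> pi_down Q S" "(ltgt Q l, Y) \<in> pi_down Q S" "is_string Q (u, X @ l # Y)"
  shows "(u, X @ l # Y) \<in> pi_down Q S"
proof -
  have "x \<in> S" if x: "x \<in> bot_factors Q (u, X @ l # Y)" for x
    using x
  proof (cases rule: bot_factors_append_Cons)
    case (3 w B1 B2)
    have "(w, B1) \<in> S" "(ltgt Q l, B2) \<in> S"
      using 3(2,3) assms(1,2) by (auto simp: pi_down_iff)
    moreover have "is_string Q (w, B1 @ l # B2)"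
      using bot_factors_is_string[OF wf_Q assms(3) x] 3(1) by simp
    ultimately show ?thesis
      using Bicl_join[OF biclosed] 3(1) by simp
  qed (use assms(1,2) in \<open>auto simp: pi_down_iff\<close>)
  with assms(3) show ?thesis
    by (auto simp: pi_down_iff)
qed

lemma zeta_eta_subset_pi_down: "zeta Q Qb (eta Qb S) \<subseteq> pi_down Q S"
proof
  fix x
  assume "x \<in> zeta Q Qb (eta Qb S)"
  then show "x \<in> pi_down Q S"
    unfolding zeta_def
  proof (induction rule: clos.induct)
    case (base \<sigma>)
    then show ?case
      using eta_walk_bot_factors_subset sigma_bot_walk_subset_pi_down by blast
  next
    case (join \<rho> \<tau> l)
    have "\<tau> \<in> pi_down Q S"
      using join.hyps(2) eta_walk_bot_factors_subset sigma_bot_walk_subset_pi_down by blast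
    then show ?case
      using pi_down_join[of "fst \<rho>" "snd \<rho>" l "snd \<tau>"] join by (cases \<tau>) simp
  qed
qed

lemma pi_down_suffix_after_direct:
  assumes "(v, X @ l # Y) \<in> pi_down Q S" "snd l"
  shows "(ltgt Q l, Y) \<in> pi_down Q S"
proof -
  have "is_string Q (ltgt Q l, Y)"
    using assms(1) is_string_split[OF wf_Q, of v X l Y] by (simp add: pi_down_iff)
  moreover have "bot_factors Q (ltgt Q l, Y) \<subseteq> bot_factors Q (v, (X @ [l]) @ Y)"
    using bot_factors_suffix[of "X @ [l]" Q v Y] assms(2) by (simp add: str_end_append)
  ultimately show ?thesis
    using assms(1) by (auto simp: pi_down_iff)
qed

lemma pi_down_first_cut:
  assumes "(v, L) \<in> pi_down Q S"
  obtains i where "i \<le> length L" "i < length L \<Longrightarrow> snd (L ! i)" "(v, take i L) \<in> S"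
    "\<And>k. k < i \<Longrightarrow> \<not> snd (L ! k) \<longleftrightarrow> (v, take k L) \<in> S"
proof -
  define cut where "cut k \<longleftrightarrow> k = length L \<or> (k < length L \<and> snd (L ! k) \<and> (v, take k L) \<in> S)" for k
  define i where "i = (LEAST k. cut k)"
  have cut_i: "cut i"
    unfolding i_def by (rule LeastI[of cut "length L"]) (simp add: cut_def)
  have i_le: "i \<le> length L"
    unfolding i_def by (rule Least_le) (simp add: cut_def)
  have BF: "bot_factors Q (v, L) \<subseteq> S"
    using assms by (simp add: pi_down_iff)
  have "(v, take k L) \<in> S" if "k \<le> length L" "k = length L \<or> \<not> snd (L ! k)" for k
    using bot_factors_prefix[of "drop k L" v "take k L" Q] that BF
    by (cases "k = length L") (auto simp: hd_drop_conv_nth)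
  moreover have "\<not> cut k" if "k < i" for k
    using not_less_Least[of k cut] that unfolding i_def by blast
  ultimately show thesis
    using cut_i i_le by (intro that[of i]) (auto simp: cut_def)
qed

end

locale finite_biclosed_blossoming = biclosed_blossoming Q Qb S + finite_blossoming Q Qb for Q Qb S
begin

lemma sign_consistent_string_bottom_of_eta:
  assumes s: "is_string Q (v, P)" and in_S: "(v, P) \<in> S"
    and signs: "\<And>k. k < length P \<Longrightarrow> \<not> snd (P ! k) \<longleftrightarrow> (v, take k P) \<in> S"
  shows "(v, P) \<in> \<Union> (sigma_bot_walk Q Qb ` eta Qb S)"
proof -
  have v: "v \<in> verts Q"
    using s by (simp add: is_string_iff_chain)
  obtain l0 where "snd l0" "ltgt Qb l0 = v" and s0: "is_string Qb (lsrc Qb l0, l0 # P)"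
    using is_string_Cons_exists[OF is_string_Q_Qb[OF s] v, of True] by blast
  then obtain \<beta> where l0: "l0 = (\<beta>, True)" and tgt_\<beta>: "tgt Qb \<beta> = v"
    by (cases l0) auto
  have \<beta>: "\<beta> \<in> arrs Qb"
    using s0 l0 by (simp add: is_string_iff_chain)
  have "str_end Qb (src Qb \<beta>, (\<beta>, True) # P) \<in> verts Q"
    using tgt_\<beta> str_end_Qb[OF s] str_end_in_verts[OF wf_Q v] s by (simp add: is_string_iff_chain)
  then obtain x where x: "\<not> snd x" "is_string Qb (src Qb \<beta>, (\<beta>, True) # P @ [x])"
    using is_string_snoc_exists[of "src Qb \<beta>" "(\<beta>, True) # P" False] s0 l0 by auto
  have "post_signs Qb S \<beta> P"
    using signs tgt_\<beta> by (simp add: post_signs_def)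
  then have "post_signs Qb S \<beta> (P @ [x])"
    using post_signs_snoc[of Qb S \<beta> P x] x(1) in_S tgt_\<beta> by simp
  then obtain \<omega> pre post where \<omega>: "is_omega Qb S \<beta> \<omega>" "snd \<omega> = pre @ (\<beta>, True) # (P @ [x]) @ post"
    using omega_through_exists[OF x(2)] by blast
  have "str_end Qb (fst \<omega>, pre @ [(\<beta>, True)]) = v"
    using tgt_\<beta> by (simp add: str_end_append)
  then have "(v, P) \<in> walk_bot_factors Q Qb \<omega>"
    using walk_bot_factorsI[of \<omega> "pre @ [(\<beta>, True)]" P "x # post" Qb Q] \<omega>(2) x(1)
      str_verts_Qb_subset[OF s] by simp
  moreover have "\<omega> \<in> eta Qb S"
    using \<omega>(1) \<beta> by (auto simp: eta_def sym_cl_def)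
  ultimately show ?thesis
    by (auto simp: sigma_bot_walk_eq sym_cl_def)
qed

lemma pi_down_subset_zeta_eta: "\<sigma> \<in> pi_down Q S \<Longrightarrow> \<sigma> \<in> zeta Q Qb (eta Qb S)"
proof (induction "length (snd \<sigma>)" arbitrary: \<sigma> rule: less_induct)
  case less
  obtain v L where \<sigma>: "\<sigma> = (v, L)"
    by (cases \<sigma>)
  obtain i where i: "i \<le> length L" "i < length L \<Longrightarrow> snd (L ! i)" "(v, take i L) \<in> S"
    "\<And>k. k < i \<Longrightarrow> \<not> snd (L ! k) \<longleftrightarrow> (v, take k L) \<in> S"
    using pi_down_first_cut less.prems \<sigma> by blast
  have s: "is_string Q (v, L)"
    using less.prems \<sigma> by (simp add: pi_down_iff)
  then have "is_string Q (v, take i L)"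
    using is_string_prefix[of Q v "take i L" "drop i L"] by simp
  then have head: "(v, take i L) \<in> zeta Q Qb (eta Qb S)"
    using sign_consistent_string_bottom_of_eta[of v "take i L"] i(1,3,4) unfolding zeta_def
    by (auto intro: clos.base)
  show ?case
  proof (cases "i = length L")
    case True
    then show ?thesis
      using head \<sigma> by simp
  next
    case False
    then have L: "L = take i L @ L ! i # drop (Suc i) L"
      using i(1) by (simp add: id_take_nth_drop)
    then have "(ltgt Q (L ! i), drop (Suc i) L) \<in> pi_down Q S"
      using pi_down_suffix_after_direct[of v "take i L" "L ! i" "drop (Suc i) L"] less.prems \<sigma> i(1,2) False
      by simp
    then have tail: "(ltgt Q (L ! i), drop (Suc i) L) \<in> zeta Q Qb (eta Qb S)"
      using less.hyps \<sigma> False i(1) by simp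
    have "is_string Q (v, take i L @ L ! i # drop (Suc i) L)"
      using s L by simp
    then have "(v, take i L @ L ! i # drop (Suc i) L) \<in> zeta Q Qb (eta Qb S)"
      using clos_join[OF tail[unfolded zeta_def] head[unfolded zeta_def], where l = "L ! i"]
      unfolding zeta_def by simp
    then show ?thesis
      using \<sigma> L by metis
  qed
qed

end

theorem proposition9p17:
  fixes Q Qb :: "('v, 'a) bquiver" and S :: "('v, 'a) str set"
  assumes "gentle Q"
    and "is_blossoming Q Qb"
    and "finite_reduced_complex Qb"
    and "S \<in> Bicl Q"
  shows "zeta Q Qb (eta Qb S) = pi_down Q S"
proof -
  interpret finite_biclosed_blossoming Q Qb S
    by unfold_locales (use assms in auto)
  show ?thesis
    using zeta_eta_subset_pi_down pi_down_subset_zeta_eta by blast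
qed

end
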